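(* Let $n\ge1$, let $\vec{k}=\{k_1<k_2<\dots<k_t\}\subseteq[n]$ be non-empty with $k_i+1<k_{i+1}$ for $1\le i<t$, and let $N$ be a $\vec k$-complicial $n$-simplex. Then the inclusion $\Lambda^{\vec k}N\subseteq N$ is an anodyne extension; if moreover $0<k_1$ and $k_t<n$, it is an inner anodyne extension.
   Context: Conventions: $[n]=\{0<\dots<n\}$; simplicial operators are order-preserving maps; $\delta_i$ is the face operator omitting $i$. A stratified set is a simplicial set with a set of thin simplices containing every degenerate simplex and no $0$-simplex; stratified maps preserve thinness (category $\mathbf{Strat}$). $\Delta[n]$ is the standard $n$-simplex with only degenerate simplices thin. A stratified subset $U\subseteq X$ is regular if its thin simplices are exactly its simplices thin in $X$; an entire superset of $\Delta[n]$ is a stratified set with the same underlying simplicial set as $\Delta[n]$ (and more thin simplices). For $0\le k\le n$: $\Delta^k[n]$ is $\Delta[n]$ in which $\alpha:[r]\to[n]$ is thin iff degenerate or its image contains $\{k-1,k,k+1\}\cap[n]$; $\Lambda^k[n]$ is the regular subset of $\alpha$ with $\mathrm{im}(\alpha)\cup\{k\}\neq[n]$; $\Delta^k[n]'$ is $\Delta^k[n]$ with additionally all $(n-1)$-faces $\delta_i$, $i\ne k$, thin; $\Delta^k[n]''$ is $\Delta^k[n]$ with all $(n-1)$-faces thin. The elementary anodyne extensions are $\Lambda^k[n]\subseteq\Delta^k[n]$ ($n\ge1$) and $\Delta^k[n]'\subseteq\Delta^k[n]''$ ($n\ge2$), inner if $0<k<n$. An (inner) anodyne extension is a map in the closure of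 pushouts of (inner) elementary anodyne extensions under transfinite composition. A non-degenerate simplex $\alpha:[r]\to[n]$ is $k$-admissible if its image contains $\{k-1,k,k+1\}\cap[n]$. For $\vec k$ as in the claim, an entire superset $N$ of $\Delta[n]$ is a $\vec k$-complicial $n$-simplex if for each $k_i\in\vec k$ and each $k_i$-admissible $\alpha:[r]\to[n]$: (a) $\alpha$ is thin in $N$; (b) if $l\in[r]$ is the integer with $\alpha(l)=k_i$ and $\alpha\circ\delta_l$ is thin in $N$, then $\alpha\circ\delta_j$ is thin in $N$ for each $j\in\{l-1,l+1\}\cap[r]$. $\Lambda^{\vec k}N$ is the regular subset of $N$ consisting of those simplices $\alpha$ with $\mathrm{im}(\alpha)\cup\vec k\ne[n]$. *)

theory Defs
  imports Main
begin

text \<open>A simplicial operator [m] -> [r] is represented by a function nat => nat that is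
  order-preserving on {..m}, maps {..m} into {..r}, and is 0 outside {..m}.\<close>

definition sop :: "nat \<Rightarrow> nat \<Rightarrow> (nat \<Rightarrow> nat) \<Rightarrow> bool" where
  "sop m r f \<longleftrightarrow> (\<forall>i j. i \<le> j \<longrightarrow> j \<le> m \<longrightarrow> f i \<le> f j)
                 \<and> (\<forall>i\<le>m. f i \<le> r) \<and> (\<forall>i. m < i \<longrightarrow> f i = 0)"

text \<open>ocomp m f g is the composite g o f, where f has domain [m].\<close>
definition ocomp :: "nat \<Rightarrow> (nat \<Rightarrow> nat) \<Rightarrow> (nat \<Rightarrow> nat) \<Rightarrow> nat \<Rightarrow> nat" where
  "ocomp m f g = (\<lambda>i. if i \<le> m then g (f i) else 0)"

definition ident :: "nat \<Rightarrow> nat \<Rightarrow> nat" where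
  "ident r = (\<lambda>i. if i \<le> r then i else 0)"

definition face_op :: "nat \<Rightarrow> nat \<Rightarrow> nat \<Rightarrow> nat" where
  "face_op m j = (\<lambda>i. if i \<le> m then (if i < j then i else Suc i) else 0)"

text \<open>A simplicial set with simplices in S, dimension function dm, and right action
  act f m x = x . f of a simplicial operator f : [m] -> [dm x]. Thin simplices T.\<close>
record 'a strat =
  S :: "'a set"
  dm :: "'a \<Rightarrow> nat"
  act :: "(nat \<Rightarrow> nat) \<Rightarrow> nat \<Rightarrow> 'a \<Rightarrow> 'a"
  T :: "'a set"

definition sset :: "'a strat \<Rightarrow> bool" where
  "sset X \<longleftrightarrow>
     (\<forall>x\<in>S X. \<forall>m f. sop m (dm X x) f \<longrightarrow> act X f m x \<in> S X \<and> dm X (act X f m x) = m)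
   \<and> (\<forall>x\<in>S X. act X (ident (dm X x)) (dm X x) x = x)
   \<and> (\<forall>x\<in>S X. \<forall>m r f g. sop r (dm X x) g \<longrightarrow> sop m r f \<longrightarrow>
        act X f m (act X g r x) = act X (ocomp m f g) m x)"

definition degenerate :: "'a strat \<Rightarrow> 'a \<Rightarrow> bool" where
  "degenerate X x \<longleftrightarrow> (\<exists>y\<in>S X. \<exists>f. sop (dm X x) (dm X y) f \<and> \<not> inj_on f {..dm X x}
                          \<and> x = act X f (dm X x) y)"

definition strat :: "'a strat \<Rightarrow> bool" where
  "strat X \<longleftrightarrow> sset X \<and> T X \<subseteq> S X \<and> (\<forall>x\<in>S X. degenerate X x \<longrightarrow> x \<in> T X)
              \<and> (\<forall>x\<in>T X. dm X x \<noteq> 0)"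

definition smap :: "'a strat \<Rightarrow> 'b strat \<Rightarrow> ('a \<Rightarrow> 'b) \<Rightarrow> bool" where
  "smap X Y h \<longleftrightarrow> (\<forall>x\<in>S X. h x \<in> S Y \<and> dm Y (h x) = dm X x
       \<and> (\<forall>m f. sop m (dm X x) f \<longrightarrow> h (act X f m x) = act Y f m (h x))
       \<and> (x \<in> T X \<longrightarrow> h x \<in> T Y))"

text \<open>Pushout squares in Strat (colimits computed levelwise on simplices; the thin
  simplices of the pushout are the images of the thin simplices):
      A --i--> B
      |f       |j
      C --g--> D \<close>
definition is_pushout ::
  "'a strat \<Rightarrow> 'b strat \<Rightarrow> 'c strat \<Rightarrow> 'd strat \<Rightarrow>
   ('a \<Rightarrow> 'b) \<Rightarrow> ('a \<Rightarrow> 'c) \<Rightarrow> ('b \<Rightarrow> 'd) \<Rightarrow> ('c \<Rightarrow> 'd) \<Rightarrow> bool" where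
  "is_pushout A B C D i f j g \<longleftrightarrow>
     strat A \<and> strat B \<and> strat C \<and> strat D
   \<and> smap A B i \<and> smap A C f \<and> smap B D j \<and> smap C D g
   \<and> (\<forall>a\<in>S A. j (i a) = g (f a))
   \<and> S D = j ` S B \<union> g ` S C
   \<and> T D = j ` T B \<union> g ` T C
   \<and> (let R = {(Inl (i a), Inr (f a)) | a. a \<in> S A} in
       \<forall>u\<in>S B <+> S C. \<forall>v\<in>S B <+> S C.
         (case_sum j g u = case_sum j g v) \<longleftrightarrow> (u, v) \<in> (R \<union> R\<inverse>)\<^sup>*)"

definition sub :: "'a strat \<Rightarrow> 'a set \<Rightarrow> 'a set \<Rightarrow> 'a strat" where
  "sub X S' T' = X\<lparr>S := S', T := T'\<rparr>"

definition substrat :: "'a strat \<Rightarrow> 'a set \<Rightarrow> 'a set \<Rightarrow> bool" where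
  "substrat X S' T' \<longleftrightarrow> S' \<subseteq> S X \<and> T' \<subseteq> T X \<and> strat (sub X S' T')"

type_synonym simplex = "nat \<times> (nat \<Rightarrow> nat)"

text \<open>Simplices of Delta[n]: operators alpha : [r] -> [n], represented as (r, alpha).\<close>
definition delta_S :: "nat \<Rightarrow> simplex set" where
  "delta_S n = {(r, f). sop r n f}"

definition delta_act :: "(nat \<Rightarrow> nat) \<Rightarrow> nat \<Rightarrow> simplex \<Rightarrow> simplex" where
  "delta_act g m x = (m, ocomp m g (snd x))"

definition mkD :: "nat \<Rightarrow> simplex set \<Rightarrow> simplex strat" where
  "mkD n Th = \<lparr>S = delta_S n, dm = fst, act = delta_act, T = Th\<rparr>"

definition degen :: "simplex \<Rightarrow> bool" where
  "degen x \<longleftrightarrow> \<not> inj_on (snd x) {..fst x}"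

definition admissible :: "nat \<Rightarrow> nat \<Rightarrow> simplex \<Rightarrow> bool" where
  "admissible n k x \<longleftrightarrow> {k - 1, k, Suc k} \<inter> {..n} \<subseteq> snd x ` {..fst x}"

definition dface :: "nat \<Rightarrow> nat \<Rightarrow> simplex" where
  "dface n i = (n - 1, face_op (n - 1) i)"

definition Delta_k_T :: "nat \<Rightarrow> nat \<Rightarrow> simplex set" where
  "Delta_k_T n k = {x \<in> delta_S n. degen x \<or> admissible n k x}"

definition Delta_k :: "nat \<Rightarrow> nat \<Rightarrow> simplex strat" where
  "Delta_k n k = mkD n (Delta_k_T n k)"

definition Lambda_k :: "nat \<Rightarrow> nat \<Rightarrow> simplex strat" where
  "Lambda_k n k = (let Sx = {x \<in> delta_S n. snd x ` {..fst x} \<union> {k} \<noteq> {..n}} in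
                   sub (Delta_k n k) Sx (Delta_k_T n k \<inter> Sx))"

definition Delta_k' :: "nat \<Rightarrow> nat \<Rightarrow> simplex strat" where
  "Delta_k' n k = mkD n (Delta_k_T n k \<union> {dface n i | i. i \<le> n \<and> i \<noteq> k})"

definition Delta_k'' :: "nat \<Rightarrow> nat \<Rightarrow> simplex strat" where
  "Delta_k'' n k = mkD n (Delta_k_T n k \<union> {dface n i | i. i \<le> n})"

definition elementary :: "bool \<Rightarrow> nat \<Rightarrow> nat \<Rightarrow> simplex strat \<Rightarrow> simplex strat \<Rightarrow> bool" where
  "elementary inner n k A B \<longleftrightarrow> k \<le> n \<and> (inner \<longrightarrow> 0 < k \<and> k < n) \<and>
     ((1 \<le> n \<and> A = Lambda_k n k \<and> B = Delta_k n k)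
    \<or> (2 \<le> n \<and> A = Delta_k' n k \<and> B = Delta_k'' n k))"

definition anod_step :: "bool \<Rightarrow> 'a strat \<Rightarrow> 'a set \<times> 'a set \<Rightarrow> 'a set \<times> 'a set \<Rightarrow> bool" where
  "anod_step inner Y c d \<longleftrightarrow>
     (\<exists>n k A B phi. elementary inner n k A B \<and>
        is_pushout A B (sub Y (fst c) (snd c)) (sub Y (fst d) (snd d)) id phi phi id)"

definition sle :: "'a set \<times> 'a set \<Rightarrow> 'a set \<times> 'a set \<Rightarrow> bool" where
  "sle c d \<longleftrightarrow> fst c \<subseteq> fst d \<and> snd c \<subseteq> snd d"

text \<open>The inclusion of the stratified subset (S',T') into Y is an (inner) anodyne extension:
  it is a transfinite composite of pushouts of elementary (inner) anodyne extensions.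
  Since such composites are composites of monomorphisms, the stages are represented
  as a well-ordered chain C of stratified subsets of Y, starting at (S',T'), continuous at
  limit stages, with union Y, each successor step being a pushout of an elementary
  (inner) anodyne extension.\<close>
definition anodyne_incl :: "bool \<Rightarrow> 'a strat \<Rightarrow> 'a set \<Rightarrow> 'a set \<Rightarrow> bool" where
  "anodyne_incl inner Y S' T' \<longleftrightarrow> strat Y \<and>
    (\<exists>C :: ('a set \<times> 'a set) set.
        (\<forall>c\<in>C. substrat Y (fst c) (snd c))
      \<and> (S', T') \<in> C \<and> (\<forall>c\<in>C. sle (S', T') c)
      \<and> (\<forall>c\<in>C. \<forall>d\<in>C. sle c d \<or> sle d c)
      \<and> (\<forall>D. D \<subseteq> C \<longrightarrow> D \<noteq> {} \<longrightarrow> (\<exists>c\<in>D. \<forall>d\<in>D. sle c d))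
      \<and> \<Union>(fst ` C) = S Y \<and> \<Union>(snd ` C) = T Y
      \<and> (\<forall>c\<in>C. \<forall>d\<in>C. c \<noteq> d \<longrightarrow> sle c d \<longrightarrow>
            (\<forall>e\<in>C. sle c e \<longrightarrow> e \<noteq> c \<longrightarrow> sle d e) \<longrightarrow> anod_step inner Y c d)
      \<and> (\<forall>c\<in>C. c \<noteq> (S', T') \<longrightarrow>
            \<not> (\<exists>b\<in>C. b \<noteq> c \<and> sle b c \<and> (\<forall>e\<in>C. sle b e \<longrightarrow> e \<noteq> b \<longrightarrow> sle c e)) \<longrightarrow>
            c = (\<Union>{fst b | b. b \<in> C \<and> sle b c \<and> b \<noteq> c}, \<Union>{snd b | b. b \<in> C \<and> sle b c \<and> b \<noteq> c})))"

definition complicial :: "nat \<Rightarrow> nat set \<Rightarrow> simplex set \<Rightarrow> bool" where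
  "complicial n K Th \<longleftrightarrow>
     (\<forall>k\<in>K. \<forall>x\<in>delta_S n. \<not> degen x \<longrightarrow> admissible n k x \<longrightarrow>
        x \<in> Th \<and>
        (\<forall>l\<le>fst x. snd x l = k \<longrightarrow> delta_act (face_op (fst x - 1) l) (fst x - 1) x \<in> Th \<longrightarrow>
            (\<forall>j\<le>fst x. (Suc j = l \<or> j = Suc l) \<longrightarrow>
                delta_act (face_op (fst x - 1) j) (fst x - 1) x \<in> Th)))"

definition Lambda_vec_S :: "nat \<Rightarrow> nat set \<Rightarrow> simplex set" where
  "Lambda_vec_S n K = {x \<in> delta_S n. snd x ` {..fst x} \<union> K \<noteq> {..n}}"

end

theory Submission
  imports Defs
begin

(* Let kmin be the least element of K and Kc = [n] - K. A simplex lies outside Lambda^K N iff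
   its vertex set contains Kc, and kmin - 1, kmin + 1 lie in Kc by the gap condition. First, for
   the sets J with kmin \<in> J \<subseteq> K, smaller ones first, glue in the face spanned by Kc \<union> J
   along a horn Lambda^l[m] \<subseteq> Delta^l[m], where l is the position of kmin: the faces of that
   face missing a vertex of Kc lie in Lambda^K N, those missing a vertex of J - {kmin} were glued
   in before, and the marking of Delta^l[m] is that of the kmin-admissible simplices, thin in N
   by condition (a). Afterwards every simplex is present, and the thin simplices of N not yet
   marked are nondegenerate, contain Kc and miss kmin. Such a simplex a is marked by gluing in
   Delta^l[m]' \<subseteq> Delta^l[m]'' along the face spanned by a and kmin: its l-th face is a, the
   faces l \<plusminus> 1 are thin by condition (b) and all other faces are kmin-admissible.
   If 0 < kmin < n, then 0 < l < m throughout, so every extension used is inner. *)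

section \<open>Simplicial operators and the standard simplex\<close>

lemma sop_ocomp: "sop m r f \<Longrightarrow> sop r n g \<Longrightarrow> sop m n (ocomp m f g)"
  unfolding sop_def ocomp_def by auto

lemma ocomp_assoc: "sop m r f \<Longrightarrow> ocomp m (ocomp m f g) h = ocomp m f (ocomp r g h)"
  unfolding sop_def ocomp_def by (auto simp: fun_eq_iff)

lemma ocomp_ident: "sop r n f \<Longrightarrow> ocomp r (ident r) f = f"
  unfolding sop_def ocomp_def ident_def by (auto simp: fun_eq_iff)

lemma sop_ident: "sop r r (ident r)"
  unfolding sop_def ident_def by auto

lemma sop_strict_mono_on: "sop m n s \<Longrightarrow> inj_on s {..m} \<Longrightarrow> strict_mono_on {..m} s"
  by (rule mono_imp_strict_mono) (auto simp: sop_def monotone_on_def)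

lemma sop_not_inj_adjacent:
  assumes "sop r n f" "\<not> inj_on f {..r}"
  obtains i where "i < r" "f i = f (Suc i)"
proof -
  from assms(2) obtain a b where ab: "a \<le> r" "b \<le> r" "a < b" "f a = f b"
    unfolding inj_on_def by (metis atMost_iff linorder_neqE_nat)
  have mono: "\<And>a b. a \<le> b \<Longrightarrow> b \<le> r \<Longrightarrow> f a \<le> f b" using assms(1) by (auto simp: sop_def)
  have "f a \<le> f (Suc a)" "f (Suc a) \<le> f b" using mono[of a "Suc a"] mono[of "Suc a" b] ab by auto
  with ab show ?thesis by (intro that[of a]) auto
qed

lemma mem_delta_S [simp]: "x \<in> delta_S n \<longleftrightarrow> sop (fst x) n (snd x)"
  unfolding delta_S_def by (cases x) auto

lemma delta_act_in_delta_S: "x \<in> delta_S n \<Longrightarrow> sop k (fst x) f \<Longrightarrow> delta_act f k x \<in> delta_S n"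
  by (simp add: delta_act_def sop_ocomp)

lemma sub_mkD: "sub (mkD n Th) S' T' = \<lparr>S = S', dm = fst, act = delta_act, T = T'\<rparr>"
  by (simp add: sub_def mkD_def)

lemma degenerate_imp_degen:
  assumes "degenerate \<lparr>S = S', dm = fst, act = delta_act, T = T'\<rparr> x"
  shows "degen x"
proof -
  from assms obtain y f where f: "\<not> inj_on f {..fst x}" "x = delta_act f (fst x) y"
    unfolding degenerate_def by auto
  then obtain i j where ij: "i \<le> fst x" "j \<le> fst x" "i \<noteq> j" "f i = f j"
    unfolding inj_on_def by auto
  have "snd x = ocomp (fst x) f (snd y)"
    using arg_cong[of _ _ snd, OF f(2)] by (simp add: delta_act_def)
  hence "snd x i = snd x j" using ij by (simp add: ocomp_def)
  with ij show ?thesis unfolding degen_def inj_on_def by auto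
qed

lemma strat_simplicesI:
  assumes "S' \<subseteq> delta_S n"
    and "\<And>x m f. x \<in> S' \<Longrightarrow> sop m (fst x) f \<Longrightarrow> delta_act f m x \<in> S'"
    and "T' \<subseteq> S'" and "\<And>x. x \<in> S' \<Longrightarrow> degen x \<Longrightarrow> x \<in> T'"
    and "\<And>x. x \<in> T' \<Longrightarrow> fst x \<noteq> 0"
  shows "strat \<lparr>S = S', dm = fst, act = delta_act, T = T'\<rparr>"
proof -
  have "sset \<lparr>S = S', dm = fst, act = delta_act, T = T'\<rparr>"
    unfolding sset_def using assms(1,2)
    by (auto simp: delta_act_def ocomp_ident ocomp_assoc subset_iff) (metis ocomp_ident)
  thus ?thesis unfolding strat_def using degenerate_imp_degen assms(3-5) by auto
qed

lemma strat_closed: "strat X \<Longrightarrow> x \<in> S X \<Longrightarrow> sop k (dm X x) f \<Longrightarrow> act X f k x \<in> S X"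
  unfolding strat_def sset_def by blast

lemma strat_T_subset: "strat X \<Longrightarrow> T X \<subseteq> S X"
  unfolding strat_def by blast

lemma strat_T_dim: "strat X \<Longrightarrow> x \<in> T X \<Longrightarrow> dm X x \<noteq> 0"
  unfolding strat_def by blast

text \<open>A degenerate simplex is obtained from its face omitting a repeated vertex through
  the codegeneracy collapsing the repeated pair.\<close>
lemma strat_degen_thin:
  assumes st: "strat X" and X: "dm X = fst" "act X = delta_act"
    and x: "x \<in> S X" "degen x" and sub: "S X \<subseteq> delta_S n"
  shows "x \<in> T X"
proof -
  obtain r f where xr: "x = (r, f)" by (cases x)
  have sopf: "sop r n f" using x sub xr by auto
  obtain i where i: "i < r" "f i = f (Suc i)"
    using sop_not_inj_adjacent[OF sopf] x(2) xr by (auto simp: degen_def)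
  define fc where "fc = face_op (r - 1) (Suc i)"
  have sfc: "sop (r - 1) r fc" unfolding fc_def sop_def face_op_def by auto
  define y where "y = delta_act fc (r - 1) x"
  have y: "y \<in> S X" "dm X y = r - 1"
    using st x(1) sfc unfolding strat_def sset_def y_def X xr by auto
  define sg where "sg = (\<lambda>j. if j \<le> r then (if j \<le> i then j else j - 1) else 0)"
  have ssg: "sop r (r - 1) sg" unfolding sg_def sop_def using i by auto
  have "sg i = sg (Suc i)" unfolding sg_def using i by auto
  hence nsg: "\<not> inj_on sg {..r}" using i by (auto dest: inj_onD)
  have "ocomp r sg (ocomp (r - 1) fc f) = f"
  proof
    fix j show "ocomp r sg (ocomp (r - 1) fc f) j = f j"
      using i sopf unfolding ocomp_def sg_def fc_def face_op_def sop_def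
      by (cases "j \<le> r"; cases "j \<le> i"; cases "j = Suc i") (auto simp: not_le Suc_le_eq)
  qed
  hence "x = act X sg r y" unfolding X y_def xr delta_act_def by simp
  moreover have "dm X x = r" using X xr by simp
  ultimately have "degenerate X x" unfolding degenerate_def
    using y nsg ssg by (intro bexI[of _ y] exI[of _ sg]) auto
  thus ?thesis using st x unfolding strat_def by auto
qed

definition verts :: "simplex \<Rightarrow> nat set" where
  "verts x = snd x ` {..fst x}"

text \<open>The map Delta[m] -> Delta[n] induced by s : [m] -> [n], y \<mapsto> s o y.\<close>
definition postcomp :: "nat \<Rightarrow> (nat \<Rightarrow> nat) \<Rightarrow> simplex \<Rightarrow> simplex" where
  "postcomp m s y = delta_act (snd y) (fst y) (m, s)"

lemma verts_subset: "x \<in> delta_S n \<Longrightarrow> verts x \<subseteq> {..n}"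
  unfolding verts_def by (auto simp: sop_def)

lemma verts_delta_act_subset: "sop k (fst y) f \<Longrightarrow> verts (delta_act f k y) \<subseteq> verts y"
  unfolding verts_def delta_act_def ocomp_def sop_def by auto

lemma nondegen_strict_mono_on:
  "x \<in> delta_S n \<Longrightarrow> \<not> degen x \<Longrightarrow> strict_mono_on {..fst x} (snd x)"
  using sop_strict_mono_on unfolding degen_def by auto

lemma card_verts_nondegen:
  "x \<in> delta_S n \<Longrightarrow> \<not> degen x \<Longrightarrow> card (verts x) = Suc (fst x)"
  unfolding verts_def degen_def by (simp add: card_image)

lemma card_below_strict_mono_on:
  fixes f :: "nat \<Rightarrow> nat"
  assumes "strict_mono_on {..r} f" "i \<le> r"
  shows "card {b \<in> f ` {..r}. b < f i} = i"
proof -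
  have "{b \<in> f ` {..r}. b < f i} = f ` {..<i}"
    using assms strict_mono_on_less[OF assms(1)] by fastforce
  moreover have "inj_on f {..<i}"
    using strict_mono_on_imp_inj_on[OF assms(1)] assms(2) by (auto intro: inj_on_subset)
  ultimately show ?thesis by (simp add: card_image)
qed

text \<open>The i-th vertex of a nondegenerate simplex is the one with exactly i vertices below it.\<close>
lemma nondegen_eq_if_verts_eq:
  assumes x: "x \<in> delta_S n" "\<not> degen x" and y: "y \<in> delta_S n" "\<not> degen y"
    and eq: "verts x = verts y"
  shows "x = y"
proof -
  have sx: "strict_mono_on {..fst x} (snd x)" and sy: "strict_mono_on {..fst y} (snd y)"
    using x y nondegen_strict_mono_on by blast+
  have fst_eq: "fst x = fst y" using card_verts_nondegen x y eq by (metis Suc_inject)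
  have "snd x i = snd y i" for i
  proof (cases "i \<le> fst x")
    case True
    then obtain j where j: "j \<le> fst y" "snd y j = snd x i"
      using eq unfolding verts_def by (metis atMost_iff image_eqI imageE)
    have "i = card {b \<in> verts x. b < snd x i}"
      using card_below_strict_mono_on[OF sx True] unfolding verts_def by simp
    also have "\<dots> = j"
      using card_below_strict_mono_on[OF sy j(1)] eq j(2) unfolding verts_def by simp
    finally show ?thesis using j by simp
  next
    case False thus ?thesis using x y fst_eq unfolding mem_delta_S sop_def by auto
  qed
  thus ?thesis using fst_eq by (simp add: prod_eq_iff fun_eq_iff)
qed

lemma exists_enumeration:
  assumes "V \<subseteq> {..n}" "V \<noteq> {}"
  shows "\<exists>m s. sop m n s \<and> inj_on s {..m} \<and> s ` {..m} = V"
proof -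
  have fin: "finite V" using assms(1) finite_subset by blast
  define xs where "xs = sorted_list_of_set V"
  have sxs: "sorted xs" "distinct xs" "set xs = V" "length xs = card V"
    using fin by (auto simp: xs_def)
  define m where "m = length xs - 1"
  have lm: "length xs = Suc m" using sxs(4) fin assms(2) unfolding m_def by (simp add: card_gt_0_iff)
  define s where "s = (\<lambda>i. if i \<le> m then xs ! i else 0)"
  have img: "s ` {..m} = V"
  proof -
    have "s ` {..m} = (\<lambda>i. xs ! i) ` {..<length xs}" unfolding s_def lm
      by (auto simp: image_def less_Suc_eq_le)
    also have "\<dots> = set xs" by (auto simp: set_conv_nth)
    finally show ?thesis using sxs by simp
  qed
  have "sop m n s" unfolding sop_def
  proof (intro conjI allI impI)
    fix i j assume "i \<le> j" "j \<le> m"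
    thus "s i \<le> s j" unfolding s_def using sorted_nth_mono[OF sxs(1)] lm by auto
  next
    fix i assume "i \<le> m"
    hence "s i \<in> V" using img by auto
    thus "s i \<le> n" using assms(1) by auto
  qed (auto simp: s_def)
  moreover have "inj_on s {..m}"
    unfolding inj_on_def s_def using sxs(2) lm by (auto simp: nth_eq_iff_index_eq)
  ultimately show ?thesis using img by auto
qed

lemma strict_mono_on_hits_Suc:
  fixes s :: "nat \<Rightarrow> nat"
  assumes "strict_mono_on {..m} s" "l \<le> m" "Suc (s l) \<in> s ` {..m}"
  shows "l < m \<and> s (Suc l) = Suc (s l)"
proof -
  obtain j where j: "j \<le> m" "s j = Suc (s l)" using assms(3) by auto
  have "l < j" using strict_mono_on_less[OF assms(1)] assms(2) j by (metis atMost_iff lessI)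
  hence "s (Suc l) \<le> s j" "s l < s (Suc l)"
    using strict_mono_on_less_eq[OF assms(1), of "Suc l" j] strict_mono_on_less[OF assms(1), of l "Suc l"] j
    by auto
  thus ?thesis using \<open>l < j\<close> j by simp
qed

lemma strict_mono_on_hits_pred:
  fixes s :: "nat \<Rightarrow> nat"
  assumes "strict_mono_on {..m} s" "l \<le> m" "0 < s l" "s l - 1 \<in> s ` {..m}"
  shows "0 < l \<and> s (l - 1) = s l - 1"
proof -
  obtain j where j: "j \<le> m" "s j = s l - 1" using assms(4) by auto
  have "j < l" using strict_mono_on_less[OF assms(1)] assms(2,3) j by (metis atMost_iff diff_less zero_less_one)
  hence "s j \<le> s (l - 1)" "s (l - 1) < s l"
    using strict_mono_on_less_eq[OF assms(1), of j "l - 1"] strict_mono_on_less[OF assms(1), of "l - 1" l]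
      j assms(2) by auto
  thus ?thesis using \<open>j < l\<close> j by simp
qed

lemma fst_postcomp [simp]: "fst (postcomp m s y) = fst y"
  unfolding postcomp_def delta_act_def by simp

lemma snd_postcomp: "snd (postcomp m s y) = ocomp (fst y) (snd y) s"
  unfolding postcomp_def delta_act_def by simp

lemma postcomp_in_delta_S: "sop m n s \<Longrightarrow> y \<in> delta_S m \<Longrightarrow> postcomp m s y \<in> delta_S n"
  by (simp add: snd_postcomp sop_ocomp)

lemma verts_postcomp: "verts (postcomp m s y) = s ` verts y"
  unfolding verts_def by (auto simp: snd_postcomp ocomp_def)

lemma postcomp_delta_act:
  "sop k (fst y) f \<Longrightarrow> postcomp m s (delta_act f k y) = delta_act f k (postcomp m s y)"
  using ocomp_assoc[of k "fst y" f "snd y" s] by (simp add: postcomp_def delta_act_def)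

lemma degen_postcomp:
  assumes "inj_on s {..m}" "y \<in> delta_S m"
  shows "degen (postcomp m s y) \<longleftrightarrow> degen y"
proof -
  have "\<forall>i\<le>fst y. snd y i \<le> m" using assms(2) by (simp add: sop_def)
  hence "inj_on (snd (postcomp m s y)) {..fst y} \<longleftrightarrow> inj_on (snd y) {..fst y}"
    using assms(1) unfolding snd_postcomp ocomp_def inj_on_def by auto
  thus ?thesis unfolding degen_def by simp
qed

lemma inj_on_postcomp:
  assumes "inj_on s {..m}"
  shows "inj_on (postcomp m s) (delta_S m)"
proof
  fix x y assume x: "x \<in> delta_S m" and y: "y \<in> delta_S m" and e: "postcomp m s x = postcomp m s y"
  have f: "fst x = fst y" using arg_cong[OF e, of fst] by simp
  have se: "ocomp (fst x) (snd x) s = ocomp (fst y) (snd y) s"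
    using arg_cong[OF e, of snd] by (simp add: snd_postcomp)
  have "snd x i = snd y i" for i
  proof (cases "i \<le> fst x")
    case True
    hence "s (snd x i) = s (snd y i)" using fun_cong[OF se, of i] f by (simp add: ocomp_def)
    moreover have "snd x i \<le> m" "snd y i \<le> m" using x y True f unfolding mem_delta_S sop_def by auto
    ultimately show ?thesis using assms by (meson atMost_iff inj_onD)
  next
    case False thus ?thesis using x y f unfolding mem_delta_S sop_def by auto
  qed
  thus "x = y" using f by (simp add: prod_eq_iff fun_eq_iff)
qed

lemma postcomp_surj:
  assumes s: "sop m n s" "inj_on s {..m}" and x: "x \<in> delta_S n" and im: "verts x \<subseteq> s ` {..m}"
  shows "\<exists>y\<in>delta_S m. x = postcomp m s y"
proof -
  have smo: "strict_mono_on {..m} s" using sop_strict_mono_on[OF s] .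
  define g where "g = (\<lambda>i. if i \<le> fst x then (THE j. j \<le> m \<and> s j = snd x i) else 0)"
  have g: "g i \<le> m \<and> s (g i) = snd x i" if i: "i \<le> fst x" for i
  proof -
    obtain j where j: "j \<le> m" "s j = snd x i" using im i unfolding verts_def by force
    have "(THE j. j \<le> m \<and> s j = snd x i) = j"
      using j strict_mono_on_eq[OF smo] by (intro the_equality) (auto, metis)
    thus ?thesis using j i by (simp add: g_def)
  qed
  have sx: "sop (fst x) n (snd x)" using x by simp
  have "sop (fst x) m g"
    unfolding sop_def
  proof (intro conjI allI impI)
    fix i j assume ij: "i \<le> j" "j \<le> fst x"
    have gi: "g i \<le> m" "s (g i) = snd x i" and gj: "g j \<le> m" "s (g j) = snd x j"
      using g ij by auto
    have "snd x i \<le> snd x j" using sx ij unfolding sop_def by blast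
    thus "g i \<le> g j" using gi gj strict_mono_on_less_eq[OF smo, of "g i" "g j"] by simp
  qed (use g in \<open>auto simp: g_def\<close>)
  moreover have "snd x = ocomp (fst x) g s"
    using g sx unfolding ocomp_def sop_def by (auto simp: fun_eq_iff)
  hence "x = postcomp m s (fst x, g)"
    by (simp add: postcomp_def delta_act_def prod_eq_iff)
  ultimately show ?thesis by (intro bexI[of _ "(fst x, g)"]) auto
qed

lemma postcomp_image:
  assumes "sop m n s" "inj_on s {..m}"
  shows "postcomp m s ` delta_S m = {x \<in> delta_S n. verts x \<subseteq> s ` {..m}}"
  using postcomp_surj[OF assms] postcomp_in_delta_S[OF assms(1)] verts_subset
  by (fastforce simp: verts_postcomp)

section \<open>Gluing along the map induced by an injective operator\<close>

lemma rtrancl_graph_symcl_same_value: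
  assumes "(u, v) \<in> (R \<union> R\<inverse>)\<^sup>*" and "R = {(Inl a, Inr (f a)) | a. a \<in> A}"
  shows "case_sum f id u = case_sum f id v"
  using assms(1) by (induction rule: rtrancl_induct) (auto simp: assms(2))

lemma case_sum_eq_iff_rtrancl_graph:
  assumes inj: "inj_on f B" and "A \<subseteq> B" and new: "\<forall>b\<in>B - A. f b \<notin> C"
    and R: "R = {(Inl a, Inr (f a)) | a. a \<in> A}"
    and u: "u \<in> B <+> C" and v: "v \<in> B <+> C"
  shows "case_sum f id u = case_sum f id v \<longleftrightarrow> (u, v) \<in> (R \<union> R\<inverse>)\<^sup>*"
proof
  assume e: "case_sum f id u = case_sum f id v"
  have glued: "(Inl b, Inr c) \<in> R" if "b \<in> B" "c \<in> C" "f b = c" for b c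
    using that new R by auto
  from u v show "(u, v) \<in> (R \<union> R\<inverse>)\<^sup>*"
  proof (elim PlusE)
    fix b b' assume "u = Inl b" "b \<in> B" "v = Inl b'" "b' \<in> B"
    thus ?thesis using e inj_onD[OF inj] by auto
  next
    fix b c assume "u = Inl b" "b \<in> B" "v = Inr c" "c \<in> C"
    thus ?thesis using e glued by auto
  next
    fix c b assume "u = Inr c" "c \<in> C" "v = Inl b" "b \<in> B"
    thus ?thesis using e glued by auto
  next
    fix c c' assume "u = Inr c" "v = Inr c'"
    thus ?thesis using e by auto
  qed
qed (use rtrancl_graph_symcl_same_value[OF _ R] in blast)

lemma strat_glue:
  assumes N: "strat (mkD n Th)"
    and s: "sop m n s" "inj_on s {..m}"
    and B: "strat (mkD m TB)"
    and C: "strat (sub (mkD n Th) Sc Tc)" "Sc \<subseteq> delta_S n"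
    and Td: "Tc \<union> postcomp m s ` TB \<subseteq> Th"
  shows "strat (sub (mkD n Th) (Sc \<union> postcomp m s ` delta_S m) (Tc \<union> postcomp m s ` TB))"
  unfolding sub_mkD
proof (rule strat_simplicesI[where n = n])
  show "Sc \<union> postcomp m s ` delta_S m \<subseteq> delta_S n"
    using C(2) postcomp_in_delta_S[OF s(1)] by auto
next
  fix x k f assume x: "x \<in> Sc \<union> postcomp m s ` delta_S m" and f: "sop k (fst x) f"
  show "delta_act f k x \<in> Sc \<union> postcomp m s ` delta_S m"
  proof (cases "x \<in> Sc")
    case True thus ?thesis using strat_closed[OF C(1)] f by (auto simp: sub_mkD)
  next
    case False
    then obtain y where y: "y \<in> delta_S m" "x = postcomp m s y" using x by auto
    hence "delta_act f k x = postcomp m s (delta_act f k y)" using postcomp_delta_act f by simp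
    moreover have "delta_act f k y \<in> delta_S m" using delta_act_in_delta_S[OF y(1)] f y by simp
    ultimately show ?thesis by blast
  qed
next
  show "Tc \<union> postcomp m s ` TB \<subseteq> Sc \<union> postcomp m s ` delta_S m"
    using strat_T_subset[OF C(1)] strat_T_subset[OF B] by (auto simp: sub_def mkD_def)
next
  fix x assume x: "x \<in> Sc \<union> postcomp m s ` delta_S m" and d: "degen x"
  show "x \<in> Tc \<union> postcomp m s ` TB"
  proof (cases "x \<in> Sc")
    case True
    thus ?thesis using strat_degen_thin[OF C(1), of x n] d C(2) by (auto simp: sub_mkD)
  next
    case False
    then obtain y where y: "y \<in> delta_S m" "x = postcomp m s y" using x by auto
    hence "y \<in> TB"
      using strat_degen_thin[OF B, of y m] degen_postcomp[OF s(2) y(1)] d by (auto simp: mkD_def)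
    thus ?thesis using y by auto
  qed
next
  fix x assume "x \<in> Tc \<union> postcomp m s ` TB"
  hence "x \<in> T (mkD n Th)" using Td by (auto simp: mkD_def)
  thus "fst x \<noteq> 0" using strat_T_dim[OF N] by (simp add: mkD_def)
qed

lemma is_pushout_postcomp:
  assumes N: "strat (mkD n Th)"
    and s: "sop m n s" "inj_on s {..m}"
    and A: "A = \<lparr>S = SA, dm = fst, act = delta_act, T = TA\<rparr>" "strat A"
    and B: "B = mkD m TB" "strat B"
    and AB: "SA \<subseteq> delta_S m" "TA \<subseteq> TB"
    and C: "strat (sub (mkD n Th) Sc Tc)" "Sc \<subseteq> delta_S n"
    and old: "postcomp m s ` SA \<subseteq> Sc" "postcomp m s ` TA \<subseteq> Tc"
    and new: "\<forall>y \<in> delta_S m - SA. postcomp m s y \<notin> Sc"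
    and Sd: "Sd = Sc \<union> postcomp m s ` delta_S m"
    and Td: "Td = Tc \<union> postcomp m s ` TB" "Td \<subseteq> Th"
  shows "is_pushout A B (sub (mkD n Th) Sc Tc) (sub (mkD n Th) Sd Td)
           id (postcomp m s) (postcomp m s) id"
proof -
  have D: "strat (sub (mkD n Th) Sd Td)"
    using strat_glue[OF N s _ C] B Sd Td by simp
  have CT: "Tc \<subseteq> Sc" using strat_T_subset[OF C(1)] by (simp add: sub_mkD)
  have rel: "\<forall>u\<in>delta_S m <+> Sc. \<forall>v\<in>delta_S m <+> Sc.
      case_sum (postcomp m s) id u = case_sum (postcomp m s) id v \<longleftrightarrow>
      (u, v) \<in> ({(Inl a, Inr (postcomp m s a)) | a. a \<in> SA}
                \<union> {(Inl a, Inr (postcomp m s a)) | a. a \<in> SA}\<inverse>)\<^sup>*"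
    using case_sum_eq_iff_rtrancl_graph[OF inj_on_postcomp[OF s(2)] AB(1) new] by blast
  show ?thesis
    unfolding is_pushout_def Let_def
  proof (intro conjI)
    show "strat A" "strat B" "strat (sub (mkD n Th) Sc Tc)" "strat (sub (mkD n Th) Sd Td)"
      by fact+
    show "smap A B id" unfolding smap_def A(1) B(1) mkD_def using AB by auto
    show "smap A (sub (mkD n Th) Sc Tc) (postcomp m s)"
      unfolding smap_def A(1) sub_mkD using old AB postcomp_delta_act by auto
    show "smap B (sub (mkD n Th) Sd Td) (postcomp m s)"
      unfolding smap_def B(1) sub_mkD using Sd Td postcomp_delta_act by (auto simp: mkD_def)
    show "smap (sub (mkD n Th) Sc Tc) (sub (mkD n Th) Sd Td) id"
      unfolding smap_def sub_mkD using Sd Td CT by auto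
    show "S (sub (mkD n Th) Sd Td) = postcomp m s ` S B \<union> id ` S (sub (mkD n Th) Sc Tc)"
      using Sd B(1) by (auto simp: sub_def mkD_def)
    show "T (sub (mkD n Th) Sd Td) = postcomp m s ` T B \<union> id ` T (sub (mkD n Th) Sc Tc)"
      using Td B(1) by (auto simp: sub_def mkD_def)
    show "\<forall>u\<in>S B <+> S (sub (mkD n Th) Sc Tc). \<forall>v\<in>S B <+> S (sub (mkD n Th) Sc Tc).
        case_sum (postcomp m s) id u = case_sum (postcomp m s) id v \<longleftrightarrow>
        (u, v) \<in> ({(Inl (id a), Inr (postcomp m s a)) | a. a \<in> S A}
                  \<union> {(Inl (id a), Inr (postcomp m s a)) | a. a \<in> S A}\<inverse>)\<^sup>*"
      using rel A(1) B(1) by (simp add: sub_def mkD_def)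
  qed simp
qed

section \<open>The elementary anodyne extensions\<close>

lemma Delta_k_T_dim:
  assumes "1 \<le> m" "l \<le> m" "x \<in> Delta_k_T m l"
  shows "fst x \<noteq> 0"
proof
  assume x0: "fst x = 0"
  hence "\<not> degen x" unfolding degen_def by simp
  hence "{l - 1, l, Suc l} \<inter> {..m} \<subseteq> snd x ` {..0}"
    using assms(3) x0 unfolding Delta_k_T_def admissible_def by auto
  moreover have "l \<noteq> Suc l" "l - 1 \<noteq> l \<or> l < m" using assms(1,2) by auto
  ultimately show False using assms(2) by (cases "l < m") auto
qed

lemma strat_mkD_Delta_k_T_Un:
  assumes "1 \<le> m" "l \<le> m" "\<forall>x\<in>F. x \<in> delta_S m \<and> fst x \<noteq> 0"
  shows "strat (mkD m (Delta_k_T m l \<union> F))"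
  unfolding mkD_def
proof (rule strat_simplicesI[where n = m])
  show "Delta_k_T m l \<union> F \<subseteq> delta_S m" using assms(3) unfolding Delta_k_T_def by auto
  show "\<And>x. x \<in> delta_S m \<Longrightarrow> degen x \<Longrightarrow> x \<in> Delta_k_T m l \<union> F"
    unfolding Delta_k_T_def by auto
  show "\<And>x. x \<in> Delta_k_T m l \<union> F \<Longrightarrow> fst x \<noteq> 0"
    using Delta_k_T_dim[OF assms(1,2)] assms(3) by blast
  show "\<And>x k f. x \<in> delta_S m \<Longrightarrow> sop k (fst x) f \<Longrightarrow> delta_act f k x \<in> delta_S m"
    using delta_act_in_delta_S by blast
qed simp

lemma strat_Delta_k: "1 \<le> m \<Longrightarrow> l \<le> m \<Longrightarrow> strat (Delta_k m l)"
  using strat_mkD_Delta_k_T_Un[of m l "{}"] by (simp add: Delta_k_def)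

lemma dface_in_delta_S: "1 \<le> m \<Longrightarrow> i \<le> m \<Longrightarrow> dface m i \<in> delta_S m"
  unfolding dface_def mem_delta_S sop_def face_op_def by auto

lemma fst_dface [simp]: "fst (dface m i) = m - 1"
  by (simp add: dface_def)

lemma strat_Delta_k': "2 \<le> m \<Longrightarrow> l \<le> m \<Longrightarrow> strat (Delta_k' m l)"
  unfolding Delta_k'_def using dface_in_delta_S[of m]
  by (intro strat_mkD_Delta_k_T_Un) force+

lemma strat_Delta_k'': "2 \<le> m \<Longrightarrow> l \<le> m \<Longrightarrow> strat (Delta_k'' m l)"
  unfolding Delta_k''_def using dface_in_delta_S[of m]
  by (intro strat_mkD_Delta_k_T_Un) force+

definition horn_S :: "nat \<Rightarrow> nat \<Rightarrow> simplex set" where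
  "horn_S m l = {x \<in> delta_S m. verts x \<union> {l} \<noteq> {..m}}"

lemma Lambda_k_eq:
  "Lambda_k m l = \<lparr>S = horn_S m l, dm = fst, act = delta_act, T = Delta_k_T m l \<inter> horn_S m l\<rparr>"
  by (simp add: Lambda_k_def Delta_k_def sub_mkD horn_S_def verts_def)

lemma strat_Lambda_k:
  assumes "1 \<le> m" "l \<le> m"
  shows "strat (Lambda_k m l)"
  unfolding Lambda_k_eq
proof (rule strat_simplicesI[where n = m])
  fix x k f assume x: "x \<in> horn_S m l" and f: "sop k (fst x) f"
  have "delta_act f k x \<in> delta_S m" using delta_act_in_delta_S f x by (simp add: horn_S_def)
  moreover have "verts (delta_act f k x) \<union> {l} \<noteq> {..m}"
    using verts_delta_act_subset[OF f] verts_subset x assms unfolding horn_S_def by blast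
  ultimately show "delta_act f k x \<in> horn_S m l" unfolding horn_S_def by blast
qed (use Delta_k_T_dim[OF assms] in \<open>auto simp: horn_S_def Delta_k_T_def\<close>)

lemma verts_dface:
  assumes "1 \<le> m" "i \<le> m"
  shows "verts (dface m i) = {..m} - {i}"
proof
  show "verts (dface m i) \<subseteq> {..m} - {i}"
    unfolding verts_def dface_def face_op_def using assms by auto
  show "{..m} - {i} \<subseteq> verts (dface m i)"
  proof
    fix j assume j: "j \<in> {..m} - {i}"
    have "j = face_op (m - 1) i (if j < i then j else j - 1)"
      "(if j < i then j else j - 1) \<le> m - 1"
      using j assms by (auto simp: face_op_def)
    thus "j \<in> verts (dface m i)" unfolding verts_def dface_def by (metis atMost_iff fst_conv imageI snd_conv)
  qed
qed

lemma dface_nondegen: "\<not> degen (dface m i)"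
  unfolding degen_def dface_def inj_on_def face_op_def by auto

lemma postcomp_dface: "postcomp m s (dface m i) = delta_act (face_op (m - 1) i) (m - 1) (m, s)"
  unfolding postcomp_def dface_def by simp

lemma ident_notin_horn_S: "l \<le> m \<Longrightarrow> (m, ident m) \<in> delta_S m - horn_S m l"
  using sop_ident[of m] by (auto simp: horn_S_def verts_def ident_def image_def)

section \<open>Finite chains of elementary anodyne extensions\<close>

definition slt :: "'a set \<times> 'a set \<Rightarrow> 'a set \<times> 'a set \<Rightarrow> bool" where
  "slt c d \<longleftrightarrow> sle c d \<and> c \<noteq> d"

lemma sle_refl: "sle c c"
  by (simp add: sle_def)

lemma sle_trans: "sle c d \<Longrightarrow> sle d e \<Longrightarrow> sle c e"
  unfolding sle_def by auto

lemma sle_antisym: "sle c d \<Longrightarrow> sle d c \<Longrightarrow> c = d"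
  unfolding sle_def by (auto simp: prod_eq_iff)

lemma slt_trans: "slt c d \<Longrightarrow> slt d e \<Longrightarrow> slt c e"
  unfolding slt_def using sle_trans sle_antisym by metis

lemma sorted_slt_sle:
  "sorted_wrt slt xs \<Longrightarrow> i \<le> j \<Longrightarrow> j < length xs \<Longrightarrow> sle (xs ! i) (xs ! j)"
  using sorted_wrt_nth_less[of slt xs i j] by (cases "i = j") (auto simp: sle_refl slt_def)

lemma sorted_slt_index_le:
  assumes "sorted_wrt slt xs" "i < length xs" "j < length xs" "sle (xs ! i) (xs ! j)"
  shows "i \<le> j"
proof (rule ccontr)
  assume "\<not> i \<le> j"
  hence "slt (xs ! j) (xs ! i)" using sorted_wrt_nth_less[OF assms(1), of j i] assms(2) by simp
  thus False using assms(4) sle_antisym unfolding slt_def by metis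
qed

lemma sorted_slt_least:
  assumes sw: "sorted_wrt slt xs" and D: "D \<subseteq> set xs" "D \<noteq> {}"
  shows "\<exists>c\<in>D. \<forall>d\<in>D. sle c d"
proof -
  obtain c where c: "c \<in> D" using D(2) by blast
  then obtain k where k: "k < length xs" "xs ! k \<in> D"
    using D(1) unfolding subset_iff in_set_conv_nth by metis
  define i where "i = (LEAST i. i < length xs \<and> xs ! i \<in> D)"
  have i: "i < length xs \<and> xs ! i \<in> D"
    unfolding i_def by (rule LeastI[of _ k]) (use k in auto)
  have "sle (xs ! i) d" if d: "d \<in> D" for d
  proof -
    obtain j where j: "j < length xs" "d = xs ! j"
      using d D(1) unfolding subset_iff in_set_conv_nth by metis
    have "i \<le> j" unfolding i_def by (rule Least_le) (use j d in auto)
    thus ?thesis using sorted_slt_sle[OF sw] j by simp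
  qed
  thus ?thesis using i by blast
qed

lemma sorted_slt_cover_Suc:
  assumes sw: "sorted_wrt slt xs" and ab: "a < b" "b < length xs"
    and cover: "\<forall>e\<in>set xs. sle (xs ! a) e \<longrightarrow> e \<noteq> xs ! a \<longrightarrow> sle (xs ! b) e"
  shows "b = Suc a"
proof (rule ccontr)
  assume "b \<noteq> Suc a"
  hence "Suc a < b" using ab by simp
  hence "slt (xs ! a) (xs ! Suc a)" "slt (xs ! Suc a) (xs ! b)"
    using sorted_wrt_nth_less[OF sw] ab by auto
  moreover have "xs ! Suc a \<in> set xs" using \<open>Suc a < b\<close> ab by simp
  ultimately show False using cover sle_antisym unfolding slt_def by metis
qed

lemma sorted_slt_pred_cover:
  assumes sw: "sorted_wrt slt xs" and j: "0 < j" "j < length xs"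
  shows "\<forall>e\<in>set xs. sle (xs ! (j - 1)) e \<longrightarrow> e \<noteq> xs ! (j - 1) \<longrightarrow> sle (xs ! j) e"
proof (intro ballI impI)
  fix e assume e: "e \<in> set xs" "sle (xs ! (j - 1)) e" "e \<noteq> xs ! (j - 1)"
  obtain k where k: "k < length xs" "e = xs ! k" using e(1) by (metis in_set_conv_nth)
  have "j - 1 \<le> k" using sorted_slt_index_le[OF sw _ k(1)] e k j by simp
  hence "j \<le> k" using e k by (cases "k = j - 1") auto
  thus "sle (xs ! j) e" using sorted_slt_sle[OF sw] k by simp
qed

fun anod_chain :: "bool \<Rightarrow> 'a strat \<Rightarrow> ('a set \<times> 'a set) list \<Rightarrow> bool" where
  "anod_chain inner Y [] = False"
| "anod_chain inner Y [c] = True"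
| "anod_chain inner Y (c # d # cs) = (anod_step inner Y c d \<and> slt c d \<and> anod_chain inner Y (d # cs))"

lemma anod_chain_snoc:
  "anod_chain inner Y xs \<Longrightarrow> anod_step inner Y (last xs) d \<Longrightarrow> slt (last xs) d \<Longrightarrow>
   anod_chain inner Y (xs @ [d])"
  by (induction inner Y xs rule: anod_chain.induct) auto

lemma anod_chain_nonempty: "anod_chain inner Y xs \<Longrightarrow> xs \<noteq> []"
  by (cases xs) auto

lemma anod_chain_sorted: "anod_chain inner Y xs \<Longrightarrow> sorted_wrt slt xs"
proof (induction inner Y xs rule: anod_chain.induct)
  case (3 inner Y c d cs)
  hence "slt c d" "sorted_wrt slt (d # cs)" by simp_all
  moreover have "\<forall>x\<in>set cs. slt c x"
    using calculation slt_trans by (simp only: sorted_wrt.simps) blast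
  ultimately show ?case by simp
qed auto

lemma anod_chain_nth:
  "anod_chain inner Y xs \<Longrightarrow> Suc j < length xs \<Longrightarrow> anod_step inner Y (xs ! j) (xs ! Suc j)"
  by (induction inner Y xs arbitrary: j rule: anod_chain.induct) (auto simp: less_Suc_eq_0_disj)

lemma sorted_slt_has_predecessor:
  assumes sw: "sorted_wrt slt xs" and c: "c \<in> set xs" "c \<noteq> xs ! 0"
  shows "\<exists>b\<in>set xs. b \<noteq> c \<and> sle b c \<and> (\<forall>e\<in>set xs. sle b e \<longrightarrow> e \<noteq> b \<longrightarrow> sle c e)"
proof -
  obtain j where j: "j < length xs" "c = xs ! j" using c(1) by (auto simp: in_set_conv_nth)
  hence "0 < j" using c(2) by (cases j) auto
  thus ?thesis using sorted_slt_pred_cover[OF sw _ j(1)] sorted_wrt_nth_less[OF sw, of "j - 1" j] j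
    by (intro bexI[of _ "xs ! (j - 1)"]) (auto simp: slt_def)
qed

lemma anod_chain_cover_step:
  assumes ch: "anod_chain inner Y xs" and cd: "c \<in> set xs" "d \<in> set xs" "slt c d"
    and cover: "\<forall>e\<in>set xs. sle c e \<longrightarrow> e \<noteq> c \<longrightarrow> sle d e"
  shows "anod_step inner Y c d"
proof -
  have sw: "sorted_wrt slt xs" using anod_chain_sorted[OF ch] .
  obtain a b where a: "a < length xs" "c = xs ! a" and b: "b < length xs" "d = xs ! b"
    using cd(1,2) by (auto simp: in_set_conv_nth)
  have "a \<le> b" using sorted_slt_index_le[OF sw a(1) b(1)] cd(3) a b by (simp add: slt_def)
  hence "a < b" using cd(3) a b by (cases "a = b") (auto simp: slt_def)
  hence "b = Suc a" using sorted_slt_cover_Suc[OF sw _ b(1)] cover a b by simp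
  thus ?thesis using anod_chain_nth[OF ch, of a] a b by simp
qed

text \<open>A finite chain is a well-ordered one in which every stage but the first is a successor
  stage, so the continuity condition of the definition is vacuous.\<close>
lemma anodyne_incl_anod_chain:
  assumes ch: "anod_chain inner Y xs" and Y: "strat Y"
    and sub: "\<forall>c\<in>set xs. substrat Y (fst c) (snd c)"
    and first: "hd xs = (S', T')" and final: "last xs = (S Y, T Y)"
  shows "anodyne_incl inner Y S' T'"
proof -
  have ne: "xs \<noteq> []" using anod_chain_nonempty[OF ch] .
  have sw: "sorted_wrt slt xs" using anod_chain_sorted[OF ch] .
  have x0: "xs ! 0 = (S', T')" using first ne by (simp add: hd_conv_nth)
  have mem: "c \<in> set xs \<longleftrightarrow> (\<exists>k<length xs. c = xs ! k)" for c by (auto simp: in_set_conv_nth)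
  have above_first: "sle (S', T') c" if "c \<in> set xs" for c
    using that sorted_slt_sle[OF sw, of 0] x0 by (auto simp: mem)
  have below_final: "sle c (S Y, T Y)" if "c \<in> set xs" for c
    using that sorted_slt_sle[OF sw, of _ "length xs - 1"] final ne by (auto simp: mem last_conv_nth)
  have "(S Y, T Y) \<in> set xs" using final ne last_in_set by metis
  hence unions: "\<Union>(fst ` set xs) = S Y" "\<Union>(snd ` set xs) = T Y"
    using below_final by (fastforce simp: sle_def)+
  have linear: "sle c d \<or> sle d c" if "c \<in> set xs" "d \<in> set xs" for c d
    using that sorted_slt_sle[OF sw] by (auto simp: mem) (metis nat_le_linear)
  have "(S', T') \<in> set xs" using x0 ne by (metis nth_mem length_greater_0_conv)
  thus ?thesis
    unfolding anodyne_incl_def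
  proof (intro conjI exI[of _ "set xs"])
    show "\<forall>D. D \<subseteq> set xs \<longrightarrow> D \<noteq> {} \<longrightarrow> (\<exists>c\<in>D. \<forall>d\<in>D. sle c d)"
      using sorted_slt_least[OF sw] by blast
    show "\<forall>c\<in>set xs. \<forall>d\<in>set xs. c \<noteq> d \<longrightarrow> sle c d \<longrightarrow>
        (\<forall>e\<in>set xs. sle c e \<longrightarrow> e \<noteq> c \<longrightarrow> sle d e) \<longrightarrow> anod_step inner Y c d"
      using anod_chain_cover_step[OF ch] unfolding slt_def by blast
    show "\<forall>c\<in>set xs. c \<noteq> (S', T') \<longrightarrow>
        \<not> (\<exists>b\<in>set xs. b \<noteq> c \<and> sle b c \<and> (\<forall>e\<in>set xs. sle b e \<longrightarrow> e \<noteq> b \<longrightarrow> sle c e)) \<longrightarrow>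
        c = (\<Union>{fst b | b. b \<in> set xs \<and> sle b c \<and> b \<noteq> c},
             \<Union>{snd b | b. b \<in> set xs \<and> sle b c \<and> b \<noteq> c})"
      using sorted_slt_has_predecessor[OF sw] x0 by auto
  qed (use Y sub above_first unions linear in auto)
qed

definition anod_reachable ::
  "bool \<Rightarrow> 'a strat \<Rightarrow> 'a set \<times> 'a set \<Rightarrow> 'a set \<times> 'a set \<Rightarrow> bool" where
  "anod_reachable inner Y c d \<longleftrightarrow> (\<exists>xs. anod_chain inner Y xs \<and> hd xs = c \<and> last xs = d
      \<and> (\<forall>e\<in>set xs. substrat Y (fst e) (snd e)))"

lemma anod_reachable_refl: "substrat Y (fst c) (snd c) \<Longrightarrow> anod_reachable inner Y c c"
  unfolding anod_reachable_def by (intro exI[of _ "[c]"]) auto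

lemma anod_reachable_step:
  assumes "anod_reachable inner Y c d" "anod_step inner Y d e" "slt d e" "substrat Y (fst e) (snd e)"
  shows "anod_reachable inner Y c e"
proof -
  obtain xs where xs: "anod_chain inner Y xs" "hd xs = c" "last xs = d"
      "\<forall>e\<in>set xs. substrat Y (fst e) (snd e)"
    using assms(1) unfolding anod_reachable_def by blast
  show ?thesis
    unfolding anod_reachable_def
    using anod_chain_snoc[OF xs(1)] anod_chain_nonempty[OF xs(1)] xs(2-4) assms(2-4)
    by (intro exI[of _ "xs @ [e]"]) auto
qed

lemma anodyne_incl_if_reachable:
  "strat Y \<Longrightarrow> anod_reachable inner Y (S', T') (S Y, T Y) \<Longrightarrow> anodyne_incl inner Y S' T'"
  unfolding anod_reachable_def using anodyne_incl_anod_chain by blast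

section \<open>The filtration of a complicial simplex\<close>

locale complicial_simplex =
  fixes n :: nat and K :: "nat set" and Th :: "simplex set"
  assumes n_pos: "1 \<le> n" and K_nonempty: "K \<noteq> {}" and K_subset: "K \<subseteq> {..n}"
    and K_gaps: "\<forall>a\<in>K. \<forall>b\<in>K. a < b \<longrightarrow> a + 1 < b"
    and strat_N: "strat (mkD n Th)" and complicial: "complicial n K Th"
begin

definition kmin :: nat where
  "kmin = Min K"

definition Kc :: "nat set" where
  "Kc = {..n} - K"

abbreviation Lam :: "simplex set" where
  "Lam \<equiv> Lambda_vec_S n K"

lemma finite_K: "finite K"
  using K_subset finite_subset by blast

lemma kmin_in_K: "kmin \<in> K"
  unfolding kmin_def using finite_K K_nonempty by simp

lemma kmin_le_n: "kmin \<le> n"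
  using kmin_in_K K_subset by auto

lemma kmin_notin_Kc: "kmin \<notin> Kc"
  unfolding Kc_def using kmin_in_K by simp

lemma pred_kmin_in_Kc: "0 < kmin \<Longrightarrow> kmin - 1 \<in> Kc"
  using Min_le[OF finite_K, of "kmin - 1"] kmin_le_n unfolding Kc_def kmin_def by auto

lemma Suc_kmin_in_Kc: "Suc kmin \<le> n \<Longrightarrow> Suc kmin \<in> Kc"
  unfolding Kc_def using K_gaps kmin_in_K by fastforce

lemma Th_subset: "Th \<subseteq> delta_S n"
  using strat_T_subset[OF strat_N] by (simp add: mkD_def)

lemma Th_dim: "x \<in> Th \<Longrightarrow> fst x \<noteq> 0"
  using strat_T_dim[OF strat_N, of x] by (simp add: mkD_def)

lemma degen_in_Th: "x \<in> delta_S n \<Longrightarrow> degen x \<Longrightarrow> x \<in> Th"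
  using strat_degen_thin[OF strat_N, of x n] by (simp add: mkD_def)

lemma mem_Lam_iff: "x \<in> Lam \<longleftrightarrow> x \<in> delta_S n \<and> verts x \<union> K \<noteq> {..n}"
  unfolding Lambda_vec_S_def verts_def by blast

lemma notin_Lam_iff: "x \<in> delta_S n \<Longrightarrow> x \<notin> Lam \<longleftrightarrow> Kc \<subseteq> verts x"
  unfolding mem_Lam_iff Kc_def using verts_subset[of x n] K_subset by auto

lemma admissible_kminI: "Kc \<subseteq> verts x \<Longrightarrow> kmin \<in> verts x \<Longrightarrow> admissible n kmin x"
  unfolding admissible_def verts_def[symmetric]
  using pred_kmin_in_Kc Suc_kmin_in_Kc by (cases "kmin = 0") auto

lemma admissible_in_Th: "x \<in> delta_S n \<Longrightarrow> \<not> degen x \<Longrightarrow> admissible n kmin x \<Longrightarrow> x \<in> Th"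
  using complicial kmin_in_K unfolding complicial_def by blast

lemma complicial_neighbour_face:
  assumes "x \<in> delta_S n" "\<not> degen x" "admissible n kmin x"
    and "l \<le> fst x" "snd x l = kmin" "delta_act (face_op (fst x - 1) l) (fst x - 1) x \<in> Th"
    and "j \<le> fst x" "Suc j = l \<or> j = Suc l"
  shows "delta_act (face_op (fst x - 1) j) (fst x - 1) x \<in> Th"
  using complicial kmin_in_K assms unfolding complicial_def by blast

definition horn_stage_S :: "nat set set \<Rightarrow> simplex set" where
  "horn_stage_S F = {x \<in> delta_S n. x \<in> Lam \<or> (\<exists>J\<in>F. verts x \<subseteq> Kc \<union> J)}"

definition horn_stage_T :: "nat set set \<Rightarrow> simplex set" where
  "horn_stage_T F = Th \<inter> horn_stage_S F \<inter> {x. x \<in> Lam \<or> degen x \<or> kmin \<in> verts x}"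

definition thin_stage_T :: "nat set set \<Rightarrow> simplex set" where
  "thin_stage_T G = Th \<inter> {x. x \<in> Lam \<or> degen x \<or> kmin \<in> verts x \<or> verts x \<in> G}"

lemma horn_stage_S_mono: "F \<subseteq> F' \<Longrightarrow> horn_stage_S F \<subseteq> horn_stage_S F'"
  unfolding horn_stage_S_def by blast

lemma horn_stage_T_mono: "F \<subseteq> F' \<Longrightarrow> horn_stage_T F \<subseteq> horn_stage_T F'"
  unfolding horn_stage_T_def using horn_stage_S_mono by blast

lemma horn_stage_empty: "horn_stage_S {} = Lam" "horn_stage_T {} = Th \<inter> Lam"
proof -
  have "Lam \<subseteq> delta_S n" unfolding Lambda_vec_S_def by blast
  thus S: "horn_stage_S {} = Lam" unfolding horn_stage_S_def by blast
  show "horn_stage_T {} = Th \<inter> Lam" unfolding horn_stage_T_def S by blast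
qed

lemma horn_stage_all:
  "horn_stage_S {J. J \<subseteq> K \<and> kmin \<in> J} = delta_S n"
  "horn_stage_T {J. J \<subseteq> K \<and> kmin \<in> J} = thin_stage_T {}"
proof -
  show S: "horn_stage_S {J. J \<subseteq> K \<and> kmin \<in> J} = delta_S n"
  proof (intro equalityI subsetI)
    fix x assume x: "x \<in> delta_S n"
    hence "verts x \<subseteq> Kc \<union> K" using verts_subset unfolding Kc_def by blast
    thus "x \<in> horn_stage_S {J. J \<subseteq> K \<and> kmin \<in> J}"
      unfolding horn_stage_S_def using x kmin_in_K by blast
  qed (simp add: horn_stage_S_def)
  show "horn_stage_T {J. J \<subseteq> K \<and> kmin \<in> J} = thin_stage_T {}"
    unfolding horn_stage_T_def thin_stage_T_def S using Th_subset by auto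
qed

lemma horn_stage_S_closed:
  assumes x: "x \<in> horn_stage_S F" and f: "sop k (fst x) f"
  shows "delta_act f k x \<in> horn_stage_S F"
proof -
  have xS: "x \<in> delta_S n" using x unfolding horn_stage_S_def by simp
  have a: "delta_act f k x \<in> delta_S n" using delta_act_in_delta_S[OF xS f] .
  have sub: "verts (delta_act f k x) \<subseteq> verts x" using verts_delta_act_subset[OF f] .
  show ?thesis
  proof (cases "x \<in> Lam")
    case True
    hence "delta_act f k x \<in> Lam"
      using a sub verts_subset[OF xS] K_subset unfolding mem_Lam_iff by blast
    thus ?thesis using a unfolding horn_stage_S_def by simp
  next
    case False
    then obtain J where "J \<in> F" "verts x \<subseteq> Kc \<union> J" using x unfolding horn_stage_S_def by auto
    thus ?thesis using a sub unfolding horn_stage_S_def by blast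
  qed
qed

lemma substrat_horn_stage: "substrat (mkD n Th) (horn_stage_S F) (horn_stage_T F)"
proof -
  have "strat (sub (mkD n Th) (horn_stage_S F) (horn_stage_T F))"
    unfolding sub_mkD
  proof (rule strat_simplicesI[where n = n])
    show "horn_stage_S F \<subseteq> delta_S n" unfolding horn_stage_S_def by blast
    show "\<And>x k f. x \<in> horn_stage_S F \<Longrightarrow> sop k (fst x) f \<Longrightarrow> delta_act f k x \<in> horn_stage_S F"
      using horn_stage_S_closed by blast
    show "horn_stage_T F \<subseteq> horn_stage_S F" unfolding horn_stage_T_def by blast
    show "\<And>x. x \<in> horn_stage_S F \<Longrightarrow> degen x \<Longrightarrow> x \<in> horn_stage_T F"
      unfolding horn_stage_T_def horn_stage_S_def using degen_in_Th by blast
    show "\<And>x. x \<in> horn_stage_T F \<Longrightarrow> fst x \<noteq> 0" unfolding horn_stage_T_def using Th_dim by blast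
  qed
  thus ?thesis unfolding substrat_def by (auto simp: mkD_def horn_stage_S_def horn_stage_T_def)
qed

lemma substrat_thin_stage: "substrat (mkD n Th) (delta_S n) (thin_stage_T G)"
proof -
  have "strat (sub (mkD n Th) (delta_S n) (thin_stage_T G))"
    unfolding sub_mkD
  proof (rule strat_simplicesI[where n = n])
    show "\<And>x k f. x \<in> delta_S n \<Longrightarrow> sop k (fst x) f \<Longrightarrow> delta_act f k x \<in> delta_S n"
      using delta_act_in_delta_S by blast
    show "thin_stage_T G \<subseteq> delta_S n" unfolding thin_stage_T_def using Th_subset by blast
    show "\<And>x. x \<in> delta_S n \<Longrightarrow> degen x \<Longrightarrow> x \<in> thin_stage_T G"
      unfolding thin_stage_T_def using degen_in_Th by blast
    show "\<And>x. x \<in> thin_stage_T G \<Longrightarrow> fst x \<noteq> 0" unfolding thin_stage_T_def using Th_dim by blast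
  qed simp
  thus ?thesis unfolding substrat_def by (auto simp: mkD_def thin_stage_T_def)
qed

end

locale kmin_enumeration = complicial_simplex +
  fixes m :: nat and s :: "nat \<Rightarrow> nat" and l :: nat
  assumes s_sop: "sop m n s" and s_inj: "inj_on s {..m}"
    and l_le_m: "l \<le> m" and s_l: "s l = kmin" and Kc_hit: "Kc \<subseteq> s ` {..m}"
begin

lemma s_strict_mono: "strict_mono_on {..m} s"
  using sop_strict_mono_on[OF s_sop s_inj] .

lemma s_eq_iff: "i \<le> m \<Longrightarrow> j \<le> m \<Longrightarrow> s i = s j \<longleftrightarrow> i = j"
  using strict_mono_on_eq[OF s_strict_mono] by simp

lemma l_pred: "0 < kmin \<Longrightarrow> 0 < l \<and> s (l - 1) = kmin - 1"
  using strict_mono_on_hits_pred[OF s_strict_mono l_le_m] s_l pred_kmin_in_Kc Kc_hit by auto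

lemma l_Suc: "Suc kmin \<le> n \<Longrightarrow> l < m \<and> s (Suc l) = Suc kmin"
  using strict_mono_on_hits_Suc[OF s_strict_mono l_le_m] s_l Suc_kmin_in_Kc Kc_hit by auto

lemma l_zero: "kmin = 0 \<Longrightarrow> l = 0"
  using strict_mono_on_less_eq[OF s_strict_mono, of 0 l] s_eq_iff[of 0 l] l_le_m s_l by simp

lemma l_eq_m: "kmin = n \<Longrightarrow> l = m"
proof (rule ccontr)
  assume "kmin = n" "l \<noteq> m"
  hence "s l < s (Suc l)" "s (Suc l) \<le> n"
    using strict_mono_on_less[OF s_strict_mono, of l "Suc l"] l_le_m s_sop unfolding sop_def by auto
  thus False using s_l \<open>kmin = n\<close> by simp
qed

lemma m_pos: "1 \<le> m"
  using l_pred l_Suc l_le_m n_pos kmin_le_n by (cases "0 < kmin") fastforce+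

lemma l_inner: "0 < kmin \<Longrightarrow> kmin < n \<Longrightarrow> 0 < l \<and> l < m"
  using l_pred l_Suc by simp

lemma s_image_neighbours: "s ` ({l - 1, l, Suc l} \<inter> {..m}) = {kmin - 1, kmin, Suc kmin} \<inter> {..n}"
proof -
  have lower: "s ` {l - 1, l} = {kmin - 1, kmin}"
    using l_pred l_zero s_l by (cases "kmin = 0") auto
  have upper: "s ` ({Suc l} \<inter> {..m}) = {Suc kmin} \<inter> {..n}"
    using l_Suc l_eq_m kmin_le_n by (cases "Suc kmin \<le> n") auto
  have split_l: "{l - 1, l, Suc l} \<inter> {..m} = {l - 1, l} \<union> ({Suc l} \<inter> {..m})"
    using l_le_m by auto
  have split_kmin: "{kmin - 1, kmin, Suc kmin} \<inter> {..n} = {kmin - 1, kmin} \<union> ({Suc kmin} \<inter> {..n})"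
    using kmin_le_n by auto
  show ?thesis unfolding split_l split_kmin image_Un lower upper ..
qed

lemma admissible_postcomp_iff:
  assumes y: "y \<in> delta_S m"
  shows "admissible n kmin (postcomp m s y) \<longleftrightarrow> admissible m l y"
proof -
  have "s ` ({l - 1, l, Suc l} \<inter> {..m}) \<subseteq> s ` verts y \<longleftrightarrow> {l - 1, l, Suc l} \<inter> {..m} \<subseteq> verts y"
    using inj_on_image_mem_iff[OF s_inj _ verts_subset[OF y]] by blast
  thus ?thesis
    unfolding admissible_def verts_def[symmetric] verts_postcomp s_image_neighbours by simp
qed

lemma postcomp_Delta_k_T:
  assumes y: "y \<in> Delta_k_T m l"
  shows "postcomp m s y \<in> Th \<and> (degen (postcomp m s y) \<or> kmin \<in> verts (postcomp m s y))"
proof -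
  have yS: "y \<in> delta_S m" and dy: "degen y \<or> admissible m l y"
    using y unfolding Delta_k_T_def by auto
  have pS: "postcomp m s y \<in> delta_S n" using postcomp_in_delta_S[OF s_sop yS] .
  show ?thesis
  proof (cases "degen y")
    case True
    thus ?thesis using degen_postcomp[OF s_inj yS] degen_in_Th[OF pS] by simp
  next
    case False
    hence adm: "admissible n kmin (postcomp m s y)" using dy admissible_postcomp_iff[OF yS] by simp
    hence "kmin \<in> verts (postcomp m s y)"
      unfolding admissible_def verts_def[symmetric] using kmin_le_n by auto
    thus ?thesis using admissible_in_Th[OF pS _ adm] degen_postcomp[OF s_inj yS] False by simp
  qed
qed

end

locale horn_filler = kmin_enumeration +
  fixes J :: "nat set" and F :: "nat set set"
  assumes s_range: "s ` {..m} = Kc \<union> J" and J_subset: "J \<subseteq> K"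
    and F_subset: "\<forall>J'\<in>F. J' \<subseteq> K \<and> kmin \<in> J'"
    and F_below: "\<forall>J'. J' \<subset> J \<longrightarrow> kmin \<in> J' \<longrightarrow> J' \<in> F"
    and F_not_above: "\<forall>J'\<in>F. \<not> J \<subseteq> J'"
begin

lemma kmin_in_J: "kmin \<in> J"
proof -
  have "kmin \<in> s ` {..m}" using s_l l_le_m by (metis atMost_iff imageI)
  thus ?thesis using s_range kmin_notin_Kc by simp
qed

lemma horn_stage_S_insert: "horn_stage_S (insert J F) = horn_stage_S F \<union> postcomp m s ` delta_S m"
proof -
  have "postcomp m s ` delta_S m = {x \<in> delta_S n. verts x \<subseteq> Kc \<union> J}"
    using postcomp_image[OF s_sop s_inj] s_range by simp
  thus ?thesis unfolding horn_stage_S_def by blast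
qed

lemma postcomp_horn_in_stage:
  assumes y: "y \<in> horn_S m l"
  shows "postcomp m s y \<in> horn_stage_S F"
proof -
  have yS: "y \<in> delta_S m" and full: "verts y \<union> {l} \<noteq> {..m}"
    using y unfolding horn_S_def by blast+
  have pS: "postcomp m s y \<in> delta_S n" using postcomp_in_delta_S[OF s_sop yS] .
  have "verts y \<union> {l} \<subset> {..m}" using full verts_subset[OF yS] l_le_m by blast
  then obtain j where j: "j \<le> m" "j \<noteq> l" "j \<notin> verts y" by (blast dest: psubset_imp_ex_mem)
  have sj: "s j \<notin> verts (postcomp m s y)"
    using inj_on_image_mem_iff[OF s_inj _ verts_subset[OF yS], of j] j unfolding verts_postcomp by simp
  have "s j \<noteq> kmin" using s_eq_iff[of j l] j l_le_m s_l by simp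
  show ?thesis
  proof (cases "s j \<in> Kc")
    case True
    hence "postcomp m s y \<in> Lam" using notin_Lam_iff[OF pS] sj by blast
    thus ?thesis unfolding horn_stage_S_def using pS by simp
  next
    case False
    hence "s j \<in> J" using s_range j(1) by auto
    hence "J - {s j} \<subset> J" "kmin \<in> J - {s j}" using \<open>s j \<noteq> kmin\<close> kmin_in_J by auto
    hence "J - {s j} \<in> F" using F_below by blast
    moreover have "verts (postcomp m s y) \<subseteq> Kc \<union> (J - {s j})"
    proof -
      have "verts (postcomp m s y) \<subseteq> s ` {..m} - {s j}"
        using sj verts_subset[OF yS] unfolding verts_postcomp by blast
      thus ?thesis using s_range by auto
    qed
    ultimately show ?thesis unfolding horn_stage_S_def using pS by blast
  qed
qed

lemma postcomp_notin_stage: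
  assumes y: "y \<in> delta_S m" "y \<notin> horn_S m l"
  shows "postcomp m s y \<notin> horn_stage_S F"
proof
  assume inS: "postcomp m s y \<in> horn_stage_S F"
  have pS: "postcomp m s y \<in> delta_S n" using postcomp_in_delta_S[OF s_sop y(1)] .
  have "verts y \<union> {l} = {..m}" using y unfolding horn_S_def by blast
  hence "s ` {..m} - {kmin} \<subseteq> verts (postcomp m s y)"
    unfolding verts_postcomp using s_l by auto
  hence big: "(Kc \<union> J) - {kmin} \<subseteq> verts (postcomp m s y)" using s_range by simp
  hence "postcomp m s y \<notin> Lam" using notin_Lam_iff[OF pS] kmin_notin_Kc by blast
  then obtain J' where J': "J' \<in> F" "verts (postcomp m s y) \<subseteq> Kc \<union> J'"
    using inS unfolding horn_stage_S_def by blast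
  have "J - {kmin} \<subseteq> J'" using big J'(2) J_subset unfolding Kc_def by blast
  moreover have "kmin \<in> J'" using F_subset J'(1) by blast
  ultimately have "J \<subseteq> J'" by blast
  thus False using F_not_above J'(1) by blast
qed

lemma horn_stage_T_insert:
  "horn_stage_T (insert J F) = horn_stage_T F \<union> postcomp m s ` Delta_k_T m l"
proof
  show "horn_stage_T F \<union> postcomp m s ` Delta_k_T m l \<subseteq> horn_stage_T (insert J F)"
    using horn_stage_T_mono[of F "insert J F"] postcomp_Delta_k_T horn_stage_S_insert
    unfolding horn_stage_T_def Delta_k_T_def by blast
  show "horn_stage_T (insert J F) \<subseteq> horn_stage_T F \<union> postcomp m s ` Delta_k_T m l"
  proof
    fix x assume x: "x \<in> horn_stage_T (insert J F)"
    show "x \<in> horn_stage_T F \<union> postcomp m s ` Delta_k_T m l"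
    proof (cases "x \<in> horn_stage_S F")
      case True thus ?thesis using x unfolding horn_stage_T_def by blast
    next
      case False
      then obtain y where y: "y \<in> delta_S m" "x = postcomp m s y"
        using x horn_stage_S_insert unfolding horn_stage_T_def by blast
      have "x \<notin> Lam" using False x unfolding horn_stage_S_def horn_stage_T_def by blast
      hence "Kc \<subseteq> verts x" using notin_Lam_iff postcomp_in_delta_S[OF s_sop y(1)] y(2) by blast
      moreover have "degen x \<or> kmin \<in> verts x" using x \<open>x \<notin> Lam\<close> unfolding horn_stage_T_def by blast
      ultimately have "degen y \<or> admissible m l y"
        using degen_postcomp[OF s_inj y(1)] admissible_postcomp_iff[OF y(1)] admissible_kminI y(2)
        by blast
      thus ?thesis using y unfolding Delta_k_T_def by blast
    qed
  qed
qed

lemma anod_step_horn_stage: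
  assumes "inner \<longrightarrow> 0 < kmin \<and> kmin < n"
  shows "anod_step inner (mkD n Th) (horn_stage_S F, horn_stage_T F)
           (horn_stage_S (insert J F), horn_stage_T (insert J F))"
proof -
  have "is_pushout (Lambda_k m l) (Delta_k m l) (sub (mkD n Th) (horn_stage_S F) (horn_stage_T F))
      (sub (mkD n Th) (horn_stage_S (insert J F)) (horn_stage_T (insert J F)))
      id (postcomp m s) (postcomp m s) id"
  proof (rule is_pushout_postcomp[OF strat_N s_sop s_inj Lambda_k_eq strat_Lambda_k[OF m_pos l_le_m]
        Delta_k_def strat_Delta_k[OF m_pos l_le_m]])
    show "horn_S m l \<subseteq> delta_S m" by (auto simp: horn_S_def)
    show "strat (sub (mkD n Th) (horn_stage_S F) (horn_stage_T F))"
      using substrat_horn_stage unfolding substrat_def by blast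
    show "horn_stage_S F \<subseteq> delta_S n" unfolding horn_stage_S_def by blast
    show "postcomp m s ` horn_S m l \<subseteq> horn_stage_S F" using postcomp_horn_in_stage by blast
    show "postcomp m s ` (Delta_k_T m l \<inter> horn_S m l) \<subseteq> horn_stage_T F"
      using postcomp_horn_in_stage postcomp_Delta_k_T unfolding horn_stage_T_def by blast
    show "\<forall>y\<in>delta_S m - horn_S m l. postcomp m s y \<notin> horn_stage_S F"
      using postcomp_notin_stage by blast
    show "horn_stage_T (insert J F) \<subseteq> Th" unfolding horn_stage_T_def by blast
  qed (auto simp: horn_stage_S_insert horn_stage_T_insert)
  moreover have "elementary inner m l (Lambda_k m l) (Delta_k m l)"
    unfolding elementary_def using l_le_m m_pos l_inner assms by auto
  ultimately show ?thesis unfolding anod_step_def fst_conv snd_conv by blast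
qed

lemma horn_stage_S_grows: "horn_stage_S F \<noteq> horn_stage_S (insert J F)"
  using ident_notin_horn_S[OF l_le_m] postcomp_notin_stage horn_stage_S_insert by blast

end

context complicial_simplex
begin

lemma horn_stage_step:
  assumes J: "J \<subseteq> K" "kmin \<in> J" and F: "\<forall>J'\<in>F. J' \<subseteq> K \<and> kmin \<in> J'"
    and below: "\<forall>J'. J' \<subset> J \<longrightarrow> kmin \<in> J' \<longrightarrow> J' \<in> F" and not_above: "\<forall>J'\<in>F. \<not> J \<subseteq> J'"
    and inner: "inner \<longrightarrow> 0 < kmin \<and> kmin < n"
  shows "anod_step inner (mkD n Th) (horn_stage_S F, horn_stage_T F)
           (horn_stage_S (insert J F), horn_stage_T (insert J F))
    \<and> slt (horn_stage_S F, horn_stage_T F) (horn_stage_S (insert J F), horn_stage_T (insert J F))"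
proof -
  have "Kc \<union> J \<subseteq> {..n}" "Kc \<union> J \<noteq> {}" using J K_subset unfolding Kc_def by auto
  then obtain m s where s: "sop m n s" "inj_on s {..m}" "s ` {..m} = Kc \<union> J"
    using exists_enumeration[of "Kc \<union> J" n] by auto
  moreover obtain l where "l \<le> m" "s l = kmin"
  proof -
    have "kmin \<in> s ` {..m}" using s(3) J(2) by simp
    thus ?thesis using that by auto
  qed
  moreover have "Kc \<subseteq> s ` {..m}" using s(3) by blast
  ultimately interpret horn_filler n K Th m s l J F
    using J(1) F below not_above by unfold_locales
  have "sle (horn_stage_S F, horn_stage_T F) (horn_stage_S (insert J F), horn_stage_T (insert J F))"
    unfolding sle_def using horn_stage_S_mono horn_stage_T_mono by (simp add: subset_insertI)
  thus ?thesis using anod_step_horn_stage[OF inner] horn_stage_S_grows unfolding slt_def by simp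
qed

end

locale thin_filler = kmin_enumeration +
  fixes a :: simplex
  assumes s_range: "s ` {..m} = insert kmin (verts a)"
    and a_thin: "a \<in> Th" and a_nondegen: "\<not> degen a" and kmin_notin_a: "kmin \<notin> verts a"
begin

lemma a_in_delta_S: "a \<in> delta_S n"
  using a_thin Th_subset by blast

lemma m_ge_2: "2 \<le> m"
proof -
  have "Suc m = card (s ` {..m})" using s_inj by (simp add: card_image)
  also have "\<dots> = Suc (Suc (fst a))"
    using s_range kmin_notin_a card_verts_nondegen[OF a_in_delta_S a_nondegen]
    by (simp add: verts_def)
  finally show ?thesis using Th_dim[OF a_thin] by simp
qed

lemma postcomp_dface_in_delta_S: "i \<le> m \<Longrightarrow> postcomp m s (dface m i) \<in> delta_S n"
  using postcomp_in_delta_S[OF s_sop dface_in_delta_S[OF m_pos]] .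

lemma postcomp_dface_nondegen: "i \<le> m \<Longrightarrow> \<not> degen (postcomp m s (dface m i))"
  using degen_postcomp[OF s_inj dface_in_delta_S[OF m_pos]] dface_nondegen by blast

lemma verts_postcomp_dface: "i \<le> m \<Longrightarrow> verts (postcomp m s (dface m i)) = s ` {..m} - {s i}"
  by (simp add: verts_postcomp verts_dface[OF m_pos] inj_on_image_set_diff[OF s_inj])

lemma postcomp_dface_l: "postcomp m s (dface m l) = a"
proof (rule nondegen_eq_if_verts_eq[OF postcomp_dface_in_delta_S[OF l_le_m]
      postcomp_dface_nondegen[OF l_le_m] a_in_delta_S a_nondegen])
  show "verts (postcomp m s (dface m l)) = verts a"
    using verts_postcomp_dface[OF l_le_m] s_range s_l kmin_notin_a by auto
qed

text \<open>The faces next to the face a are thin by condition (b), all others are admissible.\<close>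
lemma postcomp_dface_thin:
  assumes i: "i \<le> m" "i \<noteq> l"
  shows "postcomp m s (dface m i) \<in> Th"
proof (cases "Suc i = l \<or> i = Suc l")
  case True
  have sigma: "(m, s) \<in> delta_S n" "\<not> degen (m, s)" using s_sop s_inj by (auto simp: degen_def)
  have "verts (m, s) = insert kmin (verts a)" using s_range by (simp add: verts_def)
  hence "admissible n kmin (m, s)"
    using admissible_kminI Kc_hit s_range by (metis insertI1)
  moreover have "delta_act (face_op (m - 1) l) (m - 1) (m, s) \<in> Th"
    using postcomp_dface_l a_thin unfolding postcomp_dface by simp
  ultimately have "delta_act (face_op (m - 1) i) (m - 1) (m, s) \<in> Th"
    using complicial_neighbour_face[OF sigma, of l i] l_le_m s_l i True by simp
  thus ?thesis unfolding postcomp_dface .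
next
  case False
  hence "admissible m l (dface m i)"
    unfolding admissible_def verts_def[symmetric] verts_dface[OF m_pos i(1)] using i by auto
  hence "admissible n kmin (postcomp m s (dface m i))"
    using admissible_postcomp_iff[OF dface_in_delta_S[OF m_pos i(1)]] by simp
  thus ?thesis
    using admissible_in_Th postcomp_dface_in_delta_S[OF i(1)] postcomp_dface_nondegen[OF i(1)] by blast
qed

lemma postcomp_Delta_k'_thin:
  "postcomp m s ` (Delta_k_T m l \<union> {dface m i | i. i \<le> m \<and> i \<noteq> l}) \<subseteq> thin_stage_T G"
proof
  fix x assume "x \<in> postcomp m s ` (Delta_k_T m l \<union> {dface m i | i. i \<le> m \<and> i \<noteq> l})"
  then obtain y where y: "y \<in> Delta_k_T m l \<union> {dface m i | i. i \<le> m \<and> i \<noteq> l}" "x = postcomp m s y"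
    by blast
  show "x \<in> thin_stage_T G"
  proof (cases "y \<in> Delta_k_T m l")
    case True thus ?thesis using postcomp_Delta_k_T y(2) unfolding thin_stage_T_def by blast
  next
    case False
    then obtain i where i: "i \<le> m" "i \<noteq> l" "y = dface m i" using y(1) by blast
    have "s i \<noteq> kmin" using s_eq_iff[of i l] i l_le_m s_l by simp
    hence "kmin \<in> verts x" using verts_postcomp_dface[OF i(1)] y(2) i(3) s_range by simp
    thus ?thesis using postcomp_dface_thin[OF i(1,2)] y(2) i(3) unfolding thin_stage_T_def by blast
  qed
qed

lemma thin_stage_T_insert:
  "thin_stage_T (insert (verts a) G) =
     thin_stage_T G \<union> postcomp m s ` (Delta_k_T m l \<union> {dface m i | i. i \<le> m})"
proof
  show "thin_stage_T (insert (verts a) G) \<subseteq>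
      thin_stage_T G \<union> postcomp m s ` (Delta_k_T m l \<union> {dface m i | i. i \<le> m})"
  proof
    fix x assume x: "x \<in> thin_stage_T (insert (verts a) G)"
    show "x \<in> thin_stage_T G \<union> postcomp m s ` (Delta_k_T m l \<union> {dface m i | i. i \<le> m})"
    proof (cases "x \<in> thin_stage_T G")
      case False
      hence "verts x = verts a" "\<not> degen x" "x \<in> Th" using x unfolding thin_stage_T_def by auto
      hence "x = a" using nondegen_eq_if_verts_eq[OF _ _ a_in_delta_S a_nondegen] Th_subset by blast
      thus ?thesis using postcomp_dface_l l_le_m by blast
    qed simp
  qed
  have "postcomp m s ` (Delta_k_T m l \<union> {dface m i | i. i \<le> m})
      \<subseteq> postcomp m s ` (Delta_k_T m l \<union> {dface m i | i. i \<le> m \<and> i \<noteq> l}) \<union> {a}"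
    using postcomp_dface_l by blast
  moreover have "thin_stage_T G \<subseteq> thin_stage_T (insert (verts a) G)"
    unfolding thin_stage_T_def by blast
  moreover have "a \<in> thin_stage_T (insert (verts a) G)"
    using a_thin unfolding thin_stage_T_def by blast
  ultimately show "thin_stage_T G \<union> postcomp m s ` (Delta_k_T m l \<union> {dface m i | i. i \<le> m})
      \<subseteq> thin_stage_T (insert (verts a) G)"
    using postcomp_Delta_k'_thin[of "insert (verts a) G"] by blast
qed

lemma anod_step_thin_stage:
  assumes "inner \<longrightarrow> 0 < kmin \<and> kmin < n"
  shows "anod_step inner (mkD n Th) (delta_S n, thin_stage_T G)
           (delta_S n, thin_stage_T (insert (verts a) G))"
proof -
  have "is_pushout (Delta_k' m l) (Delta_k'' m l) (sub (mkD n Th) (delta_S n) (thin_stage_T G))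
      (sub (mkD n Th) (delta_S n) (thin_stage_T (insert (verts a) G)))
      id (postcomp m s) (postcomp m s) id"
  proof (rule is_pushout_postcomp[OF strat_N s_sop s_inj Delta_k'_def[unfolded mkD_def]
        strat_Delta_k'[OF m_ge_2 l_le_m] Delta_k''_def strat_Delta_k''[OF m_ge_2 l_le_m]])
    show "strat (sub (mkD n Th) (delta_S n) (thin_stage_T G))"
      using substrat_thin_stage unfolding substrat_def by blast
    show "Delta_k_T m l \<union> {dface m i | i. i \<le> m \<and> i \<noteq> l} \<subseteq> Delta_k_T m l \<union> {dface m i | i. i \<le> m}"
      by blast
    show "postcomp m s ` delta_S m \<subseteq> delta_S n" using postcomp_in_delta_S[OF s_sop] by blast
    show "postcomp m s ` (Delta_k_T m l \<union> {dface m i | i. i \<le> m \<and> i \<noteq> l}) \<subseteq> thin_stage_T G"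
      by (rule postcomp_Delta_k'_thin)
    show "\<forall>y\<in>delta_S m - delta_S m. postcomp m s y \<notin> delta_S n" by blast
    show "delta_S n = delta_S n \<union> postcomp m s ` delta_S m" using postcomp_in_delta_S[OF s_sop] by blast
    show "thin_stage_T (insert (verts a) G) =
        thin_stage_T G \<union> postcomp m s ` (Delta_k_T m l \<union> {dface m i | i. i \<le> m})"
      by (rule thin_stage_T_insert)
    show "thin_stage_T (insert (verts a) G) \<subseteq> Th" unfolding thin_stage_T_def by blast
  qed (rule subset_refl)+
  moreover have "elementary inner m l (Delta_k' m l) (Delta_k'' m l)"
    unfolding elementary_def using l_le_m m_ge_2 l_inner assms by auto
  ultimately show ?thesis unfolding anod_step_def fst_conv snd_conv by blast
qed

end

context complicial_simplex
begin

lemma thin_stage_step: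
  assumes a: "a \<in> Th" "\<not> degen a" "a \<notin> Lam" "kmin \<notin> verts a" and new: "verts a \<notin> G"
    and inner: "inner \<longrightarrow> 0 < kmin \<and> kmin < n"
  shows "anod_step inner (mkD n Th) (delta_S n, thin_stage_T G)
           (delta_S n, thin_stage_T (insert (verts a) G))
    \<and> slt (delta_S n, thin_stage_T G) (delta_S n, thin_stage_T (insert (verts a) G))"
proof -
  have aS: "a \<in> delta_S n" using a(1) Th_subset by blast
  have "insert kmin (verts a) \<subseteq> {..n}" using verts_subset[OF aS] kmin_le_n by simp
  then obtain m s where s: "sop m n s" "inj_on s {..m}" "s ` {..m} = insert kmin (verts a)"
    using exists_enumeration[of "insert kmin (verts a)" n] by auto
  moreover obtain l where "l \<le> m" "s l = kmin"
  proof -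
    have "kmin \<in> s ` {..m}" using s(3) by simp
    thus ?thesis using that by auto
  qed
  moreover have "Kc \<subseteq> s ` {..m}" using s(3) notin_Lam_iff[OF aS] a(3) by blast
  ultimately interpret thin_filler n K Th m s l a
    using a(1,2,4) by unfold_locales
  have "thin_stage_T G \<subseteq> thin_stage_T (insert (verts a) G)"
    unfolding thin_stage_T_def by blast
  moreover have "a \<in> thin_stage_T (insert (verts a) G) - thin_stage_T G"
    using a new unfolding thin_stage_T_def by blast
  ultimately have "slt (delta_S n, thin_stage_T G) (delta_S n, thin_stage_T (insert (verts a) G))"
    unfolding slt_def sle_def by auto
  thus ?thesis using anod_step_thin_stage[OF inner] by simp
qed

lemma anod_reachable_horn_stage:
  assumes inner: "inner \<longrightarrow> 0 < kmin \<and> kmin < n"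
    and F: "F \<subseteq> {J. J \<subseteq> K \<and> kmin \<in> J}" and down: "\<forall>J\<in>F. \<forall>J'. J' \<subseteq> J \<longrightarrow> kmin \<in> J' \<longrightarrow> J' \<in> F"
  shows "anod_reachable inner (mkD n Th) (Lam, Th \<inter> Lam) (horn_stage_S F, horn_stage_T F)"
proof -
  have "F \<subseteq> Pow K" using F by blast
  hence "finite F" using finite_K by (simp add: finite_subset)
  thus ?thesis using F down
  proof (induction F rule: finite_psubset_induct)
    case (psubset F)
    show ?case
    proof (cases "F = {}")
      case True
      thus ?thesis using anod_reachable_refl[of "mkD n Th" "(Lam, Th \<inter> Lam)"]
          substrat_horn_stage[of "{}"] horn_stage_empty by simp
    next
      case False
      obtain J where J: "J \<in> F" and maximal: "\<forall>J'\<in>F. J \<subseteq> J' \<longrightarrow> J = J'"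
        using finite_has_maximal[OF psubset.hyps False] by blast
      define F' where "F' = F - {J}"
      have not_above: "\<forall>J'\<in>F'. \<not> J \<subseteq> J'" using maximal unfolding F'_def by blast
      have below: "\<forall>J'. J' \<subset> J \<longrightarrow> kmin \<in> J' \<longrightarrow> J' \<in> F'"
        using psubset.prems(2) J unfolding F'_def by blast
      have down': "\<forall>J1\<in>F'. \<forall>J2. J2 \<subseteq> J1 \<longrightarrow> kmin \<in> J2 \<longrightarrow> J2 \<in> F'"
        using psubset.prems(2) not_above unfolding F'_def by blast
      have "F' \<subset> F" "F' \<subseteq> {J. J \<subseteq> K \<and> kmin \<in> J}" using J psubset.prems(1) unfolding F'_def by auto
      hence reach: "anod_reachable inner (mkD n Th) (Lam, Th \<inter> Lam) (horn_stage_S F', horn_stage_T F')"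
        using psubset.IH down' by blast
      have "J \<subseteq> K" "kmin \<in> J" "\<forall>J'\<in>F'. J' \<subseteq> K \<and> kmin \<in> J'"
        using J psubset.prems(1) unfolding F'_def by auto
      note step = horn_stage_step[OF this below not_above inner]
      have "F = insert J F'" using J unfolding F'_def by blast
      thus ?thesis using anod_reachable_step[OF reach] step substrat_horn_stage by simp
    qed
  qed
qed

definition late_thin_verts :: "nat set set" where
  "late_thin_verts = {verts x | x. x \<in> Th \<and> \<not> degen x \<and> x \<notin> Lam \<and> kmin \<notin> verts x}"

lemma anod_reachable_thin_stage:
  assumes inner: "inner \<longrightarrow> 0 < kmin \<and> kmin < n" and G: "finite G" "G \<subseteq> late_thin_verts"
  shows "anod_reachable inner (mkD n Th) (Lam, Th \<inter> Lam) (delta_S n, thin_stage_T G)"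
  using G
proof (induction G rule: finite_subset_induct')
  case empty
  have "\<forall>J\<in>{J. J \<subseteq> K \<and> kmin \<in> J}. \<forall>J'. J' \<subseteq> J \<longrightarrow> kmin \<in> J' \<longrightarrow> J' \<in> {J. J \<subseteq> K \<and> kmin \<in> J}"
    by blast
  thus ?case using anod_reachable_horn_stage[OF inner subset_refl] horn_stage_all by simp
next
  case (insert V G)
  obtain a where a: "V = verts a" "a \<in> Th" "\<not> degen a" "a \<notin> Lam" "kmin \<notin> verts a"
    using insert.hyps(2) unfolding late_thin_verts_def by blast
  note step = thin_stage_step[OF a(2-5) _ inner, of G]
  show ?case
    using anod_reachable_step[OF insert.IH] step insert.hyps(4) a(1) substrat_thin_stage by simp
qed

theorem anodyne_incl_Lam:
  assumes "inner \<longrightarrow> 0 < kmin \<and> kmin < n"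
  shows "anodyne_incl inner (mkD n Th) Lam (Th \<inter> Lam)"
proof -
  have "late_thin_verts \<subseteq> Pow {..n}"
    unfolding late_thin_verts_def using Th_subset verts_subset by blast
  hence "finite late_thin_verts" by (rule finite_subset) simp
  hence "anod_reachable inner (mkD n Th) (Lam, Th \<inter> Lam) (delta_S n, thin_stage_T late_thin_verts)"
    using anod_reachable_thin_stage[OF assms] by blast
  moreover have "thin_stage_T late_thin_verts = Th"
    unfolding thin_stage_T_def late_thin_verts_def by blast
  ultimately have "anod_reachable inner (mkD n Th) (Lam, Th \<inter> Lam) (S (mkD n Th), T (mkD n Th))"
    by (simp add: mkD_def)
  thus ?thesis using anodyne_incl_if_reachable strat_N by blast
qed

end

theorem mainTheorem2:
  fixes n :: nat and K :: "nat set" and Th :: "simplex set"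
  assumes "1 \<le> n"
    and "K \<noteq> {}" and "K \<subseteq> {..n}"
    and "\<forall>a\<in>K. \<forall>b\<in>K. a < b \<longrightarrow> a + 1 < b"
    and "strat (mkD n Th)"
    and "complicial n K Th"
  shows "anodyne_incl False (mkD n Th) (Lambda_vec_S n K) (Th \<inter> Lambda_vec_S n K)
       \<and> (0 < Min K \<and> Max K < n \<longrightarrow>
            anodyne_incl True (mkD n Th) (Lambda_vec_S n K) (Th \<inter> Lambda_vec_S n K))"
proof -
  interpret complicial_simplex n K Th using assms by unfold_locales
  have "Min K \<le> Max K" using finite_K assms(2) by simp
  hence "0 < Min K \<and> Max K < n \<Longrightarrow> 0 < kmin \<and> kmin < n" unfolding kmin_def by simp
  thus ?thesis using anodyne_incl_Lam[of False] anodyne_incl_Lam[of True] by simp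
qed

end
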